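(* Let $m\ge1$. The process $(X_s)_{0\le s\le t}$ with values in the dual space $W^{m,2}([0,t])^*$, given by $X_sh=\int_0^s h(u)\,\mathrm{d}Z_u$, is norm-càdlàg: for every sample path, $\|X_{s+\epsilon}-X_s\|\to0$ as $\epsilon\to0+$, and there exists $X_{s-}\in W^{m,2}([0,t])^*$ (namely $X_{s-}h=\int_0^{s-}h(u)\,\mathrm{d}Z_u$) with $\|X_{s-\epsilon}-X_{s-}\|\to0$ as $\epsilon\to0+$.
   Context: $(Z_s)_{0\le s\le t}$ is a real-valued càdlàg semimartingale, $t>0$. For weakly differentiable $h$ on $[0,t]$, stochastic integrals are defined pathwise by $\int_0^s h(u)\,\mathrm{d}Z_u:=h(s)Z_s-h(0)Z_0-\int_0^s Z_{u-}h'(u)\,\mathrm{d}u$ and $\int_0^{s-} h(u)\,\mathrm{d}Z_u:=h(s)Z_{s-}-h(0)Z_0-\int_0^s Z_{u-}h'(u)\,\mathrm{d}u$. $W^{m,2}([0,t])$ is the Sobolev space of functions $m$ times weakly differentiable with $m$-th derivative in $L_2$, equipped with a reproducing kernel Hilbert space norm equivalent to the standard Sobolev norm; $\|\cdot\|$ on the dual is the dual norm. *)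

theory Defs
  imports "HOL-Analysis.Analysis"
begin

definition test_fun :: "real \<Rightarrow> (real \<Rightarrow> real) \<Rightarrow> bool" where
  "test_fun t \<phi> \<longleftrightarrow>
     (\<forall>k x. ((deriv ^^ k) \<phi>) differentiable (at x)) \<and>
     (\<exists>a b. 0 < a \<and> a \<le> b \<and> b < t \<and> (\<forall>x. x \<notin> {a..b} \<longrightarrow> \<phi> x = 0))"

definition weak_deriv :: "real \<Rightarrow> (real \<Rightarrow> real) \<Rightarrow> (real \<Rightarrow> real) \<Rightarrow> bool" where
  "weak_deriv t f g \<longleftrightarrow>
     set_integrable lborel {0..t} f \<and> set_integrable lborel {0..t} g \<and>
     (\<forall>\<phi>. test_fun t \<phi> \<longrightarrow>
        (LINT u:{0..t}|lborel. f u * deriv \<phi> u) = - (LINT u:{0..t}|lborel. g u * \<phi> u))"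

definition sob_derivs :: "real \<Rightarrow> nat \<Rightarrow> (real \<Rightarrow> real) \<Rightarrow> (nat \<Rightarrow> real \<Rightarrow> real) \<Rightarrow> bool" where
  "sob_derivs t m h D \<longleftrightarrow>
     D 0 = h \<and> (\<forall>k<m. weak_deriv t (D k) (D (Suc k))) \<and>
     (\<forall>k\<le>m. set_borel_measurable lborel {0..t} (D k) \<and>
             set_integrable lborel {0..t} (\<lambda>u. (D k u)\<^sup>2))"

(* Sobolev space W^{m,2}([0,t]); elements are taken as their continuous representatives *)
definition sobolev :: "real \<Rightarrow> nat \<Rightarrow> (real \<Rightarrow> real) set" where
  "sobolev t m = {h. continuous_on {0..t} h \<and> (\<exists>D. sob_derivs t m h D)}"

(* standard Sobolev norm (equivalent to the RKHS norm of the paper) *)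
definition sob_norm :: "real \<Rightarrow> nat \<Rightarrow> (real \<Rightarrow> real) \<Rightarrow> real" where
  "sob_norm t m h = (let D = (SOME D. sob_derivs t m h D) in
      sqrt (\<Sum>k\<le>m. LINT u:{0..t}|lborel. (D k u)\<^sup>2))"

definition dual_norm :: "real \<Rightarrow> nat \<Rightarrow> ((real \<Rightarrow> real) \<Rightarrow> real) \<Rightarrow> ereal" where
  "dual_norm t m L = (SUP h \<in> {h \<in> sobolev t m. sob_norm t m h \<le> 1}. ereal \<bar>L h\<bar>)"

definition in_dual :: "real \<Rightarrow> nat \<Rightarrow> ((real \<Rightarrow> real) \<Rightarrow> real) \<Rightarrow> bool" where
  "in_dual t m L \<longleftrightarrow>
     (\<forall>h\<in>sobolev t m. \<forall>g\<in>sobolev t m. \<forall>a b. L (\<lambda>u. a * h u + b * g u) = a * L h + b * L g) \<and>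
     dual_norm t m L < \<infinity>"

definition cadlag_on :: "real \<Rightarrow> (real \<Rightarrow> real) \<Rightarrow> bool" where
  "cadlag_on t Z \<longleftrightarrow>
     (\<forall>s\<in>{0..<t}. continuous (at_right s) Z) \<and>
     (\<forall>s\<in>{0<..t}. \<exists>l. (Z \<longlongrightarrow> l) (at_left s))"

definition left_lim :: "(real \<Rightarrow> real) \<Rightarrow> real \<Rightarrow> real" where
  "left_lim Z s = (if s \<le> 0 then Z 0 else Lim (at_left s) Z)"

definition wderiv :: "real \<Rightarrow> (real \<Rightarrow> real) \<Rightarrow> real \<Rightarrow> real" where
  "wderiv t h = (SOME g. weak_deriv t h g)"

definition pw_int :: "real \<Rightarrow> (real \<Rightarrow> real) \<Rightarrow> real \<Rightarrow> (real \<Rightarrow> real) \<Rightarrow> real" where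
  "pw_int t Z s h = h s * Z s - h 0 * Z 0 - (LINT u:{0..s}|lborel. left_lim Z u * wderiv t h u)"

definition pw_int_left :: "real \<Rightarrow> (real \<Rightarrow> real) \<Rightarrow> real \<Rightarrow> (real \<Rightarrow> real) \<Rightarrow> real" where
  "pw_int_left t Z s h = h s * left_lim Z s - h 0 * Z 0 - (LINT u:{0..s}|lborel. left_lim Z u * wderiv t h u)"

end

theory Submission
  imports Defs
begin

text \<open>
  On the unit ball
  of \<open>W\<^sup>m\<^sup>,\<^sup>2\<close> with \<open>m \<ge> 1\<close> the weak derivative has \<open>L\<^sup>2\<close>-norm at most 1, so by the
  fundamental theorem of calculus for weak derivatives and Cauchy-Schwarz every \<open>h\<close> is
  \<open>1/2\<close>-Hoelder with constant 1 and uniformly bounded by a constant \<open>C\<^sub>t\<close>. If \<open>M\<close> bounds the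
  path, this gives \<open>\<bar>(h(b) w - \<integral>\<^sub>0\<^sup>b \<dots>) - (h(a) v - \<integral>\<^sub>0\<^sup>a \<dots>)\<bar> \<le> 2 M \<surd>(b - a) + C\<^sub>t \<bar>w - v\<bar>\<close>
  uniformly on the unit ball, and the cadlag property of \<open>Z\<close> makes the right-hand side
  vanish for \<open>(a, b, v, w) = (s, s + \<epsilon>, Z\<^sub>s, Z\<^sub>s\<^sub>+\<^sub>\<epsilon>)\<close> and \<open>(s - \<epsilon>, s, Z\<^sub>s\<^sub>-\<^sub>\<epsilon>, Z\<^sub>s\<^sub>-)\<close>.

  The fundamental theorem \<open>h(d) - h(c) = \<integral>\<^sub>c\<^sup>d h'\<close> for continuous \<open>h\<close> is obtained by testing the weak
  derivative against smooth plateau functions converging to the indicator of \<open>(c, d)\<close>, whose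
  derivatives are approximate identities at \<open>c\<close> and \<open>d\<close>. It also shows that weak derivatives of
  continuous functions are unique almost everywhere, which is what makes the derivative picked
  by Hilbert's choice operator in \<open>wderiv\<close> usable.
\<close>

definition smooth_upto :: "nat \<Rightarrow> (real \<Rightarrow> real) \<Rightarrow> bool" where
  "smooth_upto n f \<longleftrightarrow> (\<forall>j<n. \<forall>x. ((deriv ^^ j) f) differentiable (at x))"

definition smooth :: "(real \<Rightarrow> real) \<Rightarrow> bool" where
  "smooth f \<longleftrightarrow> (\<forall>k x. ((deriv ^^ k) f) differentiable (at x))"

lemma deriv_eqI: "(\<And>x. (f has_real_derivative f' x) (at x)) \<Longrightarrow> deriv f = f'"
  by (rule ext) (simp add: DERIV_imp_deriv)

lemma smooth_upto_0 [simp]: "smooth_upto 0 f"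
  by (simp add: smooth_upto_def)

lemma funpow_deriv_Suc: "(deriv ^^ Suc j) f = (deriv ^^ j) (deriv f)"
  by (simp add: funpow_Suc_right del: funpow.simps)

lemma smooth_upto_Suc:
  "smooth_upto (Suc n) f \<longleftrightarrow> (\<forall>x. f differentiable (at x)) \<and> smooth_upto n (deriv f)"
proof
  assume f: "smooth_upto (Suc n) f"
  show "(\<forall>x. f differentiable (at x)) \<and> smooth_upto n (deriv f)"
  proof
    show "\<forall>x. f differentiable (at x)"
      using f[unfolded smooth_upto_def, rule_format, of 0] by simp
    show "smooth_upto n (deriv f)"
      unfolding smooth_upto_def
    proof (intro allI impI)
      fix j x assume "j < n"
      then show "(deriv ^^ j) (deriv f) differentiable (at x)"
        using f[unfolded smooth_upto_def, rule_format, of "Suc j" x]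
        by (simp add: funpow_deriv_Suc del: funpow.simps)
    qed
  qed
next
  assume f: "(\<forall>x. f differentiable (at x)) \<and> smooth_upto n (deriv f)"
  show "smooth_upto (Suc n) f"
    unfolding smooth_upto_def
  proof (intro allI impI)
    fix j x assume "j < Suc n"
    then show "(deriv ^^ j) f differentiable (at x)"
      using f unfolding smooth_upto_def
      by (cases j) (auto simp: funpow_deriv_Suc simp del: funpow.simps)
  qed
qed

lemma smooth_iff_smooth_upto: "smooth f \<longleftrightarrow> (\<forall>n. smooth_upto n f)"
  unfolding smooth_def smooth_upto_def by (meson lessI)

lemma smooth_iff_deriv: "smooth f \<longleftrightarrow> (\<forall>x. f differentiable (at x)) \<and> smooth (deriv f)"
  unfolding smooth_iff_smooth_upto
proof
  assume "\<forall>n. smooth_upto n f"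
  then show "(\<forall>x. f differentiable (at x)) \<and> (\<forall>n. smooth_upto n (deriv f))"
    using smooth_upto_Suc by blast
next
  assume f: "(\<forall>x. f differentiable (at x)) \<and> (\<forall>n. smooth_upto n (deriv f))"
  show "\<forall>n. smooth_upto n f"
  proof
    fix n show "smooth_upto n f" using f by (cases n) (auto simp: smooth_upto_Suc)
  qed
qed

lemma deriv_add_fun:
  fixes f g :: "real \<Rightarrow> real"
  assumes "\<forall>x. f differentiable (at x)" "\<forall>x. g differentiable (at x)"
  shows "deriv (\<lambda>x. f x + g x) = (\<lambda>x. deriv f x + deriv g x)"
proof (rule deriv_eqI)
  fix x
  have "(f has_real_derivative deriv f x) (at x)" "(g has_real_derivative deriv g x) (at x)"
    using assms DERIV_deriv_iff_real_differentiable by blast+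
  then show "((\<lambda>x. f x + g x) has_real_derivative deriv f x + deriv g x) (at x)"
    by (rule DERIV_add)
qed

lemma deriv_mult_fun:
  fixes f g :: "real \<Rightarrow> real"
  assumes "\<forall>x. f differentiable (at x)" "\<forall>x. g differentiable (at x)"
  shows "deriv (\<lambda>x. f x * g x) = (\<lambda>x. deriv f x * g x + f x * deriv g x)"
proof (rule deriv_eqI)
  fix x
  have "(f has_real_derivative deriv f x) (at x)" "(g has_real_derivative deriv g x) (at x)"
    using assms DERIV_deriv_iff_real_differentiable by blast+
  from DERIV_mult[OF this]
  show "((\<lambda>x. f x * g x) has_real_derivative deriv f x * g x + f x * deriv g x) (at x)"
    by (simp add: mult.commute)
qed

lemma deriv_cmult_fun:
  fixes f :: "real \<Rightarrow> real"
  assumes "\<forall>x. f differentiable (at x)"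
  shows "deriv (\<lambda>x. c * f x) = (\<lambda>x. c * deriv f x)"
proof (rule deriv_eqI)
  fix x
  have "(f has_real_derivative deriv f x) (at x)"
    using assms DERIV_deriv_iff_real_differentiable by blast
  from DERIV_cmult[OF this] show "((\<lambda>x. c * f x) has_real_derivative c * deriv f x) (at x)" .
qed

lemma deriv_affine_fun:
  fixes f :: "real \<Rightarrow> real"
  assumes "\<forall>x. f differentiable (at x)"
  shows "deriv (\<lambda>x. f (a * x + b)) = (\<lambda>x. a * deriv f (a * x + b))"
proof (rule deriv_eqI)
  fix x
  have f': "(f has_real_derivative deriv f (a * x + b)) (at (a * x + b))"
    using assms by (simp add: DERIV_deriv_iff_real_differentiable)
  have "((\<lambda>x. a * x + b) has_real_derivative a) (at x)"
    by (auto intro!: derivative_eq_intros)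
  from DERIV_chain2[OF f' this]
  show "((\<lambda>x. f (a * x + b)) has_real_derivative a * deriv f (a * x + b)) (at x)"
    by (simp add: mult.commute)
qed

lemma smooth_upto_add:
  fixes f g :: "real \<Rightarrow> real"
  shows "smooth_upto n f \<Longrightarrow> smooth_upto n g \<Longrightarrow> smooth_upto n (\<lambda>x. f x + g x)"
proof (induction n arbitrary: f g)
  case (Suc n)
  have f: "\<forall>x. f differentiable (at x)" "smooth_upto n (deriv f)"
    and g: "\<forall>x. g differentiable (at x)" "smooth_upto n (deriv g)"
    using Suc.prems smooth_upto_Suc by blast+
  have "smooth_upto n (\<lambda>x. deriv f x + deriv g x)"
    using Suc.IH f g by blast
  moreover have "\<forall>x. (\<lambda>x. f x + g x) differentiable (at x)"
    using f g by simp
  ultimately show ?case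
    unfolding smooth_upto_Suc deriv_add_fun[OF f(1) g(1)] by blast
qed simp

lemma smooth_upto_cmult:
  fixes f :: "real \<Rightarrow> real"
  shows "smooth_upto n f \<Longrightarrow> smooth_upto n (\<lambda>x. c * f x)"
proof (induction n arbitrary: f)
  case (Suc n)
  have f: "\<forall>x. f differentiable (at x)" "smooth_upto n (deriv f)"
    using Suc.prems smooth_upto_Suc by blast+
  have "smooth_upto n (\<lambda>x. c * deriv f x)"
    using Suc.IH f by blast
  moreover have "\<forall>x. (\<lambda>x. c * f x) differentiable (at x)"
    using f by simp
  ultimately show ?case
    unfolding smooth_upto_Suc deriv_cmult_fun[OF f(1)] by blast
qed simp

lemma smooth_upto_affine:
  fixes f :: "real \<Rightarrow> real"
  shows "smooth_upto n f \<Longrightarrow> smooth_upto n (\<lambda>x. f (a * x + b))"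
proof (induction n arbitrary: f)
  case (Suc n)
  have f: "\<forall>x. f differentiable (at x)" "smooth_upto n (deriv f)"
    using Suc.prems smooth_upto_Suc by blast+
  have "smooth_upto n (\<lambda>x. deriv f (a * x + b))"
    using Suc.IH f by blast
  then have "smooth_upto n (\<lambda>x. a * deriv f (a * x + b))"
    by (rule smooth_upto_cmult)
  moreover have "\<forall>x. (\<lambda>x. f (a * x + b)) differentiable (at x)"
  proof
    fix x
    have "(\<lambda>x. a * x + b) differentiable (at x)"
      by simp
    then show "(\<lambda>x. f (a * x + b)) differentiable (at x)"
      using f differentiable_compose[of f] by blast
  qed
  ultimately show ?case
    unfolding smooth_upto_Suc deriv_affine_fun[OF f(1)] by blast
qed simp

lemma smooth_upto_mult:
  fixes f g :: "real \<Rightarrow> real"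
  shows "smooth f \<Longrightarrow> smooth g \<Longrightarrow> smooth_upto n (\<lambda>x. f x * g x)"
proof (induction n arbitrary: f g)
  case (Suc n)
  have f: "\<forall>x. f differentiable (at x)" "smooth (deriv f)"
    and g: "\<forall>x. g differentiable (at x)" "smooth (deriv g)"
    using Suc.prems smooth_iff_deriv by blast+
  have "smooth_upto n (\<lambda>x. deriv f x * g x)" "smooth_upto n (\<lambda>x. f x * deriv g x)"
    using Suc.IH f g Suc.prems by blast+
  then have "smooth_upto n (\<lambda>x. deriv f x * g x + f x * deriv g x)"
    by (rule smooth_upto_add)
  moreover have "\<forall>x. (\<lambda>x. f x * g x) differentiable (at x)"
    using f g by simp
  ultimately show ?case
    unfolding smooth_upto_Suc deriv_mult_fun[OF f(1) g(1)] by blast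
qed simp

lemma smooth_mult: "smooth f \<Longrightarrow> smooth g \<Longrightarrow> smooth (\<lambda>x. f x * g x)"
  using smooth_upto_mult smooth_iff_smooth_upto by blast

lemma smooth_add: "smooth f \<Longrightarrow> smooth g \<Longrightarrow> smooth (\<lambda>x. f x + g x)"
  using smooth_upto_add smooth_iff_smooth_upto by blast

lemma smooth_cmult: "smooth f \<Longrightarrow> smooth (\<lambda>x. c * f x)"
  using smooth_upto_cmult smooth_iff_smooth_upto by blast

lemma smooth_affine: "smooth f \<Longrightarrow> smooth (\<lambda>x. f (a * x + b))"
  using smooth_upto_affine smooth_iff_smooth_upto by blast

lemma smooth_diff: "smooth f \<Longrightarrow> smooth g \<Longrightarrow> smooth (\<lambda>x. f x - g x)"
  using smooth_add[of f "\<lambda>x. (-1) * g x"] smooth_cmult[of g "-1"] by simp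

lemma smooth_antiderivative:
  assumes "smooth g" and "\<And>x. (f has_real_derivative g x) (at x)"
  shows "smooth f"
proof -
  have "deriv f = g"
    using assms(2) by (rule deriv_eqI)
  moreover have "\<forall>x. f differentiable (at x)"
    using assms(2) real_differentiable_def by blast
  ultimately show ?thesis
    using assms(1) smooth_iff_deriv by metis
qed

section \<open>A smooth bump and a smooth step\<close>

definition exp_inv_pow :: "nat \<Rightarrow> real \<Rightarrow> real" where
  "exp_inv_pow i x = (if x > 0 then (inverse x) ^ i * exp (- inverse x) else 0)"

inductive exp_inv_span :: "(real \<Rightarrow> real) \<Rightarrow> bool" where
  exp_inv_pow: "exp_inv_span (exp_inv_pow i)"
| add: "exp_inv_span f \<Longrightarrow> exp_inv_span g \<Longrightarrow> exp_inv_span (\<lambda>x. f x + g x)"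
| cmult: "exp_inv_span f \<Longrightarrow> exp_inv_span (\<lambda>x. c * f x)"

lemma tendsto_exp_inv_pow_at_right_0:
  "((\<lambda>x. (inverse x) ^ i * exp (- inverse x)) \<longlongrightarrow> 0) (at_right (0::real))"
proof -
  have "((\<lambda>x. x ^ i / exp x) \<longlongrightarrow> (0::real)) at_top"
    by (rule tendsto_power_div_exp_0)
  then have "((\<lambda>x. (inverse x) ^ i / exp (inverse x)) \<longlongrightarrow> (0::real)) (at_right 0)"
    using filterlim_at_top_to_right[where f = "\<lambda>x. x ^ i / exp x" and F = "nhds 0"] by simp
  then show ?thesis
    by (simp add: exp_minus divide_inverse)
qed

lemma exp_inv_pow_has_derivative_0: "(exp_inv_pow i has_real_derivative 0) (at 0)"
proof -
  have "((\<lambda>y. (exp_inv_pow i y - exp_inv_pow i 0) / (y - 0)) \<longlongrightarrow> 0) (at 0)"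
    unfolding filterlim_at_split
  proof
    have "eventually (\<lambda>y::real. y < 0) (at_left 0)"
      by (simp add: eventually_at_filter)
    then have "eventually (\<lambda>y. (exp_inv_pow i y - exp_inv_pow i 0) / (y - 0) = 0) (at_left 0)"
      by eventually_elim (simp add: exp_inv_pow_def)
    then show "((\<lambda>y. (exp_inv_pow i y - exp_inv_pow i 0) / (y - 0)) \<longlongrightarrow> 0) (at_left 0)"
      by (rule tendsto_eventually)
  next
    have "eventually (\<lambda>y::real. y > 0) (at_right 0)"
      by (simp add: eventually_at_filter)
    then have "eventually (\<lambda>y. (inverse y) ^ Suc i * exp (- inverse y)
        = (exp_inv_pow i y - exp_inv_pow i 0) / (y - 0)) (at_right 0)"
      by eventually_elim (simp add: exp_inv_pow_def divide_inverse mult_ac)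
    with tendsto_exp_inv_pow_at_right_0[of "Suc i"]
    show "((\<lambda>y. (exp_inv_pow i y - exp_inv_pow i 0) / (y - 0)) \<longlongrightarrow> 0) (at_right 0)"
      by (rule Lim_transform_eventually)
  qed
  then show ?thesis
    by (simp add: has_field_derivative_iff)
qed

lemma exp_inv_pow_has_derivative:
  "(exp_inv_pow i has_real_derivative
     (- real i * exp_inv_pow (Suc i) x + exp_inv_pow (Suc (Suc i)) x)) (at x)"
proof (cases x "0 :: real" rule: linorder_cases)
  case greater
  have ev: "eventually (\<lambda>y. exp_inv_pow i y = (inverse y) ^ i * exp (- inverse y)) (nhds x)"
    using eventually_nhds_in_open[of "{0<..}" x] greater
    by (auto elim!: eventually_mono simp: exp_inv_pow_def)
  have d: "((\<lambda>y. (inverse y) ^ i * exp (- inverse y)) has_real_derivative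
      (real i * (inverse x) ^ (i - 1) * (- inverse (x\<^sup>2))) * exp (- inverse x)
      + (inverse x) ^ i * (exp (- inverse x) * inverse (x\<^sup>2))) (at x)"
    using greater by (auto intro!: derivative_eq_intros simp: power2_eq_square)
  have "(real i * (inverse x) ^ (i - 1) * (- inverse (x\<^sup>2))) * exp (- inverse x)
      + (inverse x) ^ i * (exp (- inverse x) * inverse (x\<^sup>2))
      = - real i * exp_inv_pow (Suc i) x + exp_inv_pow (Suc (Suc i)) x"
    using greater by (cases i) (simp_all add: exp_inv_pow_def power2_eq_square field_simps)
  then show ?thesis
    using d DERIV_cong_ev[OF refl ev refl] by simp
next
  case less
  have ev: "eventually (\<lambda>y. exp_inv_pow i y = 0) (nhds x)"
    using eventually_nhds_in_open[of "{..<0}" x] less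
    by (auto elim!: eventually_mono simp: exp_inv_pow_def)
  have "((\<lambda>y. 0) has_real_derivative 0) (at x)"
    by simp
  then have "(exp_inv_pow i has_real_derivative 0) (at x)"
    using DERIV_cong_ev[OF refl ev refl] by blast
  then show ?thesis
    using less by (simp add: exp_inv_pow_def)
next
  case equal
  then show ?thesis
    using exp_inv_pow_has_derivative_0 by (simp add: exp_inv_pow_def)
qed

lemma exp_inv_span_has_derivative:
  "exp_inv_span f \<Longrightarrow> \<exists>f'. exp_inv_span f' \<and> (\<forall>x. (f has_real_derivative f' x) (at x))"
proof (induction rule: exp_inv_span.induct)
  case (exp_inv_pow i)
  have "exp_inv_span (\<lambda>x. - real i * exp_inv_pow (Suc i) x + exp_inv_pow (Suc (Suc i)) x)"
    by (intro exp_inv_span.intros)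
  then show ?case
    using exp_inv_pow_has_derivative by blast
next
  case (add f g)
  then obtain f' g' where "exp_inv_span f'" "exp_inv_span g'"
    "\<forall>x. (f has_real_derivative f' x) (at x)" "\<forall>x. (g has_real_derivative g' x) (at x)"
    by blast
  then show ?case
    by (intro exI[of _ "\<lambda>x. f' x + g' x"]) (auto intro!: exp_inv_span.intros DERIV_add)
next
  case (cmult f c)
  then obtain f' where "exp_inv_span f'" "\<forall>x. (f has_real_derivative f' x) (at x)"
    by blast
  then show ?case
    by (intro exI[of _ "\<lambda>x. c * f' x"]) (auto intro!: exp_inv_span.intros DERIV_cmult)
qed

lemma exp_inv_span_smooth_upto: "\<forall>f. exp_inv_span f \<longrightarrow> smooth_upto n f"
proof (induction n)
  case (Suc n)
  show ?case
  proof (intro allI impI)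
    fix f assume "exp_inv_span f"
    then obtain f' where f': "exp_inv_span f'" "\<forall>x. (f has_real_derivative f' x) (at x)"
      using exp_inv_span_has_derivative by blast
    then have "deriv f = f'"
      by (intro deriv_eqI) auto
    then show "smooth_upto (Suc n) f"
      using f' Suc real_differentiable_def unfolding smooth_upto_Suc by metis
  qed
qed simp

lemma exp_inv_span_smooth: "exp_inv_span f \<Longrightarrow> smooth f"
  using exp_inv_span_smooth_upto smooth_iff_smooth_upto by blast

definition bump :: "real \<Rightarrow> real" where
  "bump x = exp_inv_pow 0 x * exp_inv_pow 0 (1 - x)"

lemma bump_smooth: "smooth bump"
proof -
  have "smooth (exp_inv_pow 0)"
    by (intro exp_inv_span_smooth exp_inv_span.intros)
  moreover from this have "smooth (\<lambda>x. exp_inv_pow 0 ((-1) * x + 1))"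
    by (rule smooth_affine)
  ultimately show ?thesis
    unfolding bump_def using smooth_mult by simp
qed

lemma bump_nonneg: "bump x \<ge> 0"
  by (simp add: bump_def exp_inv_pow_def)

lemma bump_pos: "0 < x \<Longrightarrow> x < 1 \<Longrightarrow> bump x > 0"
  by (simp add: bump_def exp_inv_pow_def)

lemma bump_eq_0: "x \<le> 0 \<or> 1 \<le> x \<Longrightarrow> bump x = 0"
  by (auto simp: bump_def exp_inv_pow_def)

lemma continuous_on_bump: "continuous_on A bump"
proof -
  have "bump differentiable (at x)" for x
    using bump_smooth smooth_iff_deriv by blast
  then show ?thesis
    by (meson continuous_at_imp_continuous_on differentiable_imp_continuous_within)
qed

definition bump_primitive :: "real \<Rightarrow> real" where
  "bump_primitive u = integral {0..u} bump"

lemma bump_integrable: "bump integrable_on {a..b}"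
  by (rule integrable_continuous_interval) (rule continuous_on_bump)

lemma bump_primitive_eq_integral:
  assumes "a \<le> 0" "a \<le> u"
  shows "bump_primitive u = integral {a..u} bump"
proof (cases "u < 0")
  case True
  have "integral {a..u} bump = integral {a..u} (\<lambda>x. 0)"
    by (rule integral_cong) (use True in \<open>auto intro: bump_eq_0\<close>)
  then show ?thesis
    using True by (simp add: bump_primitive_def)
next
  case False
  have "integral {a..0} bump = integral {a..0} (\<lambda>x. 0)"
    by (rule integral_cong) (auto intro: bump_eq_0)
  moreover have "integral {a..0} bump + integral {0..u} bump = integral {a..u} bump"
    by (rule Henstock_Kurzweil_Integration.integral_combine)
      (use False assms in \<open>auto intro: bump_integrable\<close>)
  ultimately show ?thesis
    by (simp add: bump_primitive_def)
qed

lemma bump_primitive_has_derivative: "(bump_primitive has_real_derivative bump x) (at x)"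
proof -
  define a where "a = min 0 x - 1"
  have "((\<lambda>u. integral {a..u} bump) has_real_derivative bump x) (at x within {a..x+1})"
    by (rule integral_has_real_derivative) (auto simp: a_def intro: continuous_on_bump)
  moreover have "x \<in> interior {a..x+1}"
    by (simp add: a_def)
  ultimately have "((\<lambda>u. integral {a..u} bump) has_real_derivative bump x) (at x)"
    using at_within_interior by metis
  then show ?thesis
    by (rule has_field_derivative_transform_within_open[where S = "{a<..}"])
      (auto simp: a_def intro!: bump_primitive_eq_integral[symmetric])
qed

lemma continuous_on_bump_primitive: "continuous_on A bump_primitive"
  using bump_primitive_has_derivative
  by (meson DERIV_isCont continuous_at_imp_continuous_on)

lemma bump_primitive_eq_0: "u \<le> 0 \<Longrightarrow> bump_primitive u = 0"
  by (cases "u < 0") (auto simp: bump_primitive_def)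

lemma bump_primitive_eq_mass:
  assumes "1 \<le> u"
  shows "bump_primitive u = bump_primitive 1"
proof -
  have "integral {1..u} bump = integral {1..u} (\<lambda>x. 0)"
    by (rule integral_cong) (auto intro: bump_eq_0)
  moreover have "integral {0..1} bump + integral {1..u} bump = integral {0..u} bump"
    by (rule Henstock_Kurzweil_Integration.integral_combine)
      (use assms in \<open>auto intro: bump_integrable\<close>)
  ultimately show ?thesis
    by (simp add: bump_primitive_def)
qed

lemma bump_primitive_mono:
  assumes "u \<le> v"
  shows "bump_primitive u \<le> bump_primitive v"
proof (rule DERIV_nonneg_imp_increasing_open[OF assms])
  fix x
  show "\<exists>y. DERIV bump_primitive x :> y \<and> y \<ge> 0"
    using bump_primitive_has_derivative bump_nonneg by blast
qed (rule continuous_on_bump_primitive)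

lemma bump_primitive_1_pos: "bump_primitive 1 > 0"
proof -
  have "bump_primitive differentiable (at x)" for x
    using bump_primitive_has_derivative real_differentiable_def by blast
  then have "\<exists>l z. 1/4 < z \<and> z < 3/4 \<and> DERIV bump_primitive z :> l \<and>
      bump_primitive (3/4) - bump_primitive (1/4) = (3/4 - 1/4) * l"
    by (intro MVT) (auto intro: continuous_on_bump_primitive)
  then obtain l z where z: "1/4 < z" "z < 3/4" "DERIV bump_primitive z :> l"
      "bump_primitive (3/4) - bump_primitive (1/4) = (3/4 - 1/4) * l"
    by blast
  have "l = bump z"
    using z(3) bump_primitive_has_derivative DERIV_unique by blast
  then have "bump_primitive (1/4) < bump_primitive (3/4)"
    using z bump_pos[of z] by simp
  moreover have "bump_primitive 0 \<le> bump_primitive (1/4)" "bump_primitive (3/4) \<le> bump_primitive 1"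
    by (auto intro: bump_primitive_mono)
  ultimately show ?thesis
    by (simp add: bump_primitive_eq_0)
qed

definition step :: "real \<Rightarrow> real" where
  "step x = bump_primitive x / bump_primitive 1"

lemma step_has_derivative: "(step has_real_derivative bump x / bump_primitive 1) (at x)"
  unfolding step_def by (intro DERIV_cdivide bump_primitive_has_derivative)

lemma step_smooth: "smooth step"
proof (rule smooth_antiderivative[OF _ step_has_derivative])
  have "smooth (\<lambda>x. inverse (bump_primitive 1) * bump x)"
    by (intro smooth_cmult bump_smooth)
  then show "smooth (\<lambda>x. bump x / bump_primitive 1)"
    by (simp add: divide_inverse mult.commute)
qed

lemma step_eq_0: "u \<le> 0 \<Longrightarrow> step u = 0"
  by (simp add: step_def bump_primitive_eq_0)

lemma step_eq_1: "1 \<le> u \<Longrightarrow> step u = 1"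
  using bump_primitive_eq_mass[of u] bump_primitive_1_pos by (simp add: step_def)

lemma step_mono: "u \<le> v \<Longrightarrow> step u \<le> step v"
  using bump_primitive_1_pos bump_primitive_mono by (simp add: step_def divide_right_mono)

lemma step_nonneg: "step u \<ge> 0"
  using step_mono[of "min u 0" u] step_eq_0[of "min u 0"] by simp

lemma step_le_1: "step u \<le> 1"
  using step_mono[of u "max u 1"] step_eq_1[of "max u 1"] by simp

section \<open>Test functions approximating the indicator of an interval\<close>

definition ramp :: "real \<Rightarrow> real \<Rightarrow> real \<Rightarrow> real" where
  "ramp n a x = step (n * (x - a))"

definition bump_kernel :: "real \<Rightarrow> real \<Rightarrow> real \<Rightarrow> real" where
  "bump_kernel n a x = n * bump (n * (x - a)) / bump_primitive 1"

definition plateau :: "real \<Rightarrow> real \<Rightarrow> real \<Rightarrow> real \<Rightarrow> real" where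
  "plateau c d n x = ramp n c x - ramp n (d - 1 / n) x"

lemma ramp_has_derivative: "(ramp n a has_real_derivative bump_kernel n a x) (at x)"
proof -
  have "((\<lambda>x. n * (x - a)) has_real_derivative n) (at x)"
    by (auto intro!: derivative_eq_intros)
  from DERIV_chain2[OF step_has_derivative this] show ?thesis
    unfolding ramp_def[abs_def] bump_kernel_def by (simp add: mult.commute)
qed

lemma ramp_smooth: "smooth (ramp n a)"
proof -
  have "ramp n a = (\<lambda>x. step (n * x + - n * a))"
    by (simp add: ramp_def fun_eq_iff algebra_simps)
  then show ?thesis
    using smooth_affine[OF step_smooth, of n "- n * a"] by (simp only:)
qed

lemma ramp_eq_0: "0 \<le> n \<Longrightarrow> x \<le> a \<Longrightarrow> ramp n a x = 0"
  by (simp add: ramp_def step_eq_0 mult_nonneg_nonpos)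

lemma ramp_eq_1:
  assumes "0 < n" "a + 1 / n \<le> x"
  shows "ramp n a x = 1"
proof -
  have "n * (1 / n) \<le> n * (x - a)"
    using assms by (intro mult_left_mono) auto
  then show ?thesis
    using assms(1) by (simp add: ramp_def step_eq_1)
qed

lemma ramp_antimono: "0 \<le> n \<Longrightarrow> a \<le> b \<Longrightarrow> ramp n b x \<le> ramp n a x"
  by (simp add: ramp_def step_mono mult_left_mono)

lemma bump_kernel_nonneg: "0 \<le> n \<Longrightarrow> 0 \<le> bump_kernel n a x"
  using bump_primitive_1_pos bump_nonneg by (simp add: bump_kernel_def)

lemma bump_kernel_eq_0:
  assumes "0 < n" "x \<notin> {a..a + 1 / n}"
  shows "bump_kernel n a x = 0"
proof -
  have "n * (x - a) \<le> 0 \<or> 1 \<le> n * (x - a)"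
  proof (cases "x < a")
    case True
    then show ?thesis
      using assms by (simp add: mult_nonneg_nonpos)
  next
    case False
    then have "n * (1 / n) \<le> n * (x - a)"
      using assms by (intro mult_left_mono) auto
    then show ?thesis
      using assms(1) by simp
  qed
  then show ?thesis
    by (simp add: bump_kernel_def bump_eq_0)
qed

lemma continuous_on_bump_kernel: "continuous_on A (bump_kernel n a)"
proof -
  have "continuous_on A (\<lambda>x. n * (x - a))"
    by (intro continuous_intros)
  then have "continuous_on A (\<lambda>x. bump (n * (x - a)))"
    using continuous_on_compose2[OF continuous_on_bump[of UNIV]] by auto
  then show ?thesis
    unfolding bump_kernel_def using bump_primitive_1_pos by (intro continuous_intros) auto
qed

lemma bump_kernel_integral:
  assumes "0 < n" "0 \<le> a" "a + 1 / n \<le> t"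
  shows "(LINT x:{0..t}|lborel. bump_kernel n a x) = 1"
proof -
  have t: "0 \<le> t"
    using assms by (smt (verit) divide_pos_pos)
  have "(LBINT x=ereal 0..ereal t. bump_kernel n a x) = ramp n a t - ramp n a 0"
  proof (rule interval_integral_FTC_finite)
    show "continuous_on {min 0 t..max 0 t} (bump_kernel n a)"
      by (rule continuous_on_bump_kernel)
    fix x
    show "(ramp n a has_vector_derivative bump_kernel n a x) (at x within {min 0 t..max 0 t})"
      using ramp_has_derivative[of n a x]
      by (simp add: has_real_derivative_iff_has_vector_derivative has_vector_derivative_at_within)
  qed
  also have "\<dots> = 1"
    using assms by (simp add: ramp_eq_0 ramp_eq_1)
  finally show ?thesis
    using interval_integral_Icc[OF t, of "bump_kernel n a"] by simp
qed

lemma plateau_has_derivative: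
  "(plateau c d n has_real_derivative bump_kernel n c x - bump_kernel n (d - 1 / n) x) (at x)"
  unfolding plateau_def[abs_def] by (intro DERIV_diff ramp_has_derivative)

lemma deriv_plateau: "deriv (plateau c d n) = (\<lambda>x. bump_kernel n c x - bump_kernel n (d - 1 / n) x)"
  by (rule deriv_eqI) (rule plateau_has_derivative)

lemma continuous_on_plateau: "continuous_on A (plateau c d n)"
  using plateau_has_derivative by (meson DERIV_isCont continuous_at_imp_continuous_on)

lemma plateau_eq_0:
  assumes "0 < n" "1 \<le> n * (d - c)" "x \<notin> {c<..<d}"
  shows "plateau c d n x = 0"
proof -
  have "c + 1 / n \<le> d"
    using assms by (simp add: field_simps)
  then show ?thesis
    using assms by (cases "x \<le> c") (auto simp: plateau_def ramp_eq_0 ramp_eq_1)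
qed

lemma plateau_test_fun:
  assumes "0 < c" "c < d" "d < t" "0 < n" "1 \<le> n * (d - c)"
  shows "test_fun t (plateau c d n)"
  unfolding test_fun_def
proof (intro conjI exI)
  show "\<forall>k x. (deriv ^^ k) (plateau c d n) differentiable (at x)"
    using smooth_diff[OF ramp_smooth ramp_smooth] unfolding smooth_def plateau_def[abs_def] .
  show "\<forall>x. x \<notin> {c..d} \<longrightarrow> plateau c d n x = 0"
    using plateau_eq_0[OF assms(4,5)] by auto
qed (use assms in auto)

lemma plateau_bounds:
  assumes "0 < n" "1 \<le> n * (d - c)"
  shows "0 \<le> plateau c d n x" "plateau c d n x \<le> 1"
proof -
  have "c \<le> d - 1 / n"
    using assms by (simp add: field_simps)
  then show "0 \<le> plateau c d n x"
    using assms ramp_antimono[of n c "d - 1 / n" x] by (simp add: plateau_def)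
  show "plateau c d n x \<le> 1"
    using step_nonneg[of "n * (x - (d - 1 / n))"] step_le_1[of "n * (x - c)"]
    by (simp add: plateau_def ramp_def)
qed

lemma plateau_tendsto_indicator:
  assumes "c < d"
  shows "(\<lambda>k. plateau c d (real k) x) \<longlonglongrightarrow> indicator {c<..<d} x"
proof (rule tendsto_eventually)
  show "eventually (\<lambda>k. plateau c d (real k) x = indicator {c<..<d} x) sequentially"
  proof (cases "x \<in> {c<..<d}")
    case True
    obtain N :: nat where N: "1 / (x - c) < N" "1 / (d - x) < N"
      using reals_Archimedean2[of "max (1 / (x - c)) (1 / (d - x))"] by auto
    have "plateau c d (real k) x = 1" if "N \<le> k" for k
    proof -
      have k: "1 / (x - c) < real k" "1 / (d - x) < real k"
        using N that by linarith+
      moreover have "0 < 1 / (x - c)"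
        using True by simp
      ultimately have "0 < real k"
        by linarith
      with k True have "c + 1 / real k \<le> x" "x \<le> d - 1 / real k"
        by (simp_all add: field_simps)
      then show ?thesis
        using True \<open>0 < real k\<close> by (simp add: plateau_def ramp_eq_0 ramp_eq_1)
    qed
    then show ?thesis
      using True unfolding eventually_sequentially by auto
  next
    case False
    obtain N :: nat where N: "1 / (d - c) < N"
      using reals_Archimedean2 by auto
    have "plateau c d (real k) x = 0" if "N \<le> k" for k
    proof (rule plateau_eq_0)
      have "1 / (d - c) < real k"
        using N that by linarith
      moreover have "0 < 1 / (d - c)"
        using assms by simp
      ultimately have "0 < real k"
        by linarith
      with \<open>1 / (d - c) < real k\<close> show "0 < real k" "1 \<le> real k * (d - c)"
        using assms by (auto simp: field_simps)
    qed (use False in simp)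
    then show ?thesis
      using False unfolding eventually_sequentially by auto
  qed
qed

lemma bump_kernel_integral_approx:
  assumes h: "continuous_on {0..t} h" and n: "0 < n" and a: "0 \<le> a" "a + 1 / n \<le> t"
    and e: "\<forall>x\<in>{a..a + 1 / n}. \<bar>h x - h p\<bar> \<le> e"
  shows "\<bar>(LINT x:{0..t}|lborel. h x * bump_kernel n a x) - h p\<bar> \<le> e"
proof -
  have iK: "set_integrable lborel {0..t} (bump_kernel n a)"
    using continuous_on_bump_kernel by (rule borel_integrable_atLeastAtMost')
  have ihK: "set_integrable lborel {0..t} (\<lambda>x. h x * bump_kernel n a x)"
    by (intro borel_integrable_atLeastAtMost' continuous_intros h continuous_on_bump_kernel)
  have iD: "set_integrable lborel {0..t} (\<lambda>x. h x * bump_kernel n a x - h p * bump_kernel n a x)"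
    using ihK iK by (intro set_integral_diff) auto
  have ieK: "set_integrable lborel {0..t} (\<lambda>x. c * bump_kernel n a x)" for c
    using iK by (rule set_integrable_mult_right)
  have pointwise: "\<bar>h x * bump_kernel n a x - h p * bump_kernel n a x\<bar> \<le> e * bump_kernel n a x" for x
  proof (cases "x \<in> {a..a + 1 / n}")
    case True
    then have "\<bar>h x - h p\<bar> * bump_kernel n a x \<le> e * bump_kernel n a x"
      using e bump_kernel_nonneg[of n a x] n by (intro mult_right_mono) auto
    then show ?thesis
      using bump_kernel_nonneg[of n a x] n by (simp add: left_diff_distrib[symmetric] abs_mult)
  next
    case False
    then show ?thesis
      using bump_kernel_eq_0[OF n False] by simp
  qed
  have "(LINT x:{0..t}|lborel. h x * bump_kernel n a x - h p * bump_kernel n a x)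
      = (LINT x:{0..t}|lborel. h x * bump_kernel n a x) - h p"
    using set_integral_diff(2)[OF ihK set_integrable_mult_right[OF iK]] bump_kernel_integral[OF n a]
    by simp
  moreover have "(LINT x:{0..t}|lborel. h x * bump_kernel n a x - h p * bump_kernel n a x)
      \<le> (LINT x:{0..t}|lborel. e * bump_kernel n a x)"
    using iD ieK pointwise by (intro set_integral_mono) (auto simp: abs_le_iff)
  moreover have "(LINT x:{0..t}|lborel. - (e * bump_kernel n a x))
      \<le> (LINT x:{0..t}|lborel. h x * bump_kernel n a x - h p * bump_kernel n a x)"
  proof (rule set_integral_mono[OF _ iD])
    show "set_integrable lborel {0..t} (\<lambda>x. - (e * bump_kernel n a x))"
      using ieK[of "- e"] by simp
    fix x
    show "- (e * bump_kernel n a x) \<le> h x * bump_kernel n a x - h p * bump_kernel n a x"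
      using pointwise[of x] by (simp add: abs_le_iff)
  qed
  moreover have "(LINT x:{0..t}|lborel. - (e * bump_kernel n a x)) = - e"
    using set_integral_uminus[OF ieK[of e]] bump_kernel_integral[OF n a] by simp
  ultimately show ?thesis
    using bump_kernel_integral[OF n a] by (simp add: abs_le_iff)
qed

lemma tendsto_bump_kernel_integral:
  assumes h: "continuous_on {0..t} h" and p: "p \<in> {0..t}"
    and a: "\<And>k. 0 < n k \<and> 0 \<le> a k \<and> a k + 1 / n k \<le> t \<and> a k \<le> p \<and> p \<le> a k + 1 / n k"
    and n: "(\<lambda>k. 1 / n k) \<longlonglongrightarrow> 0"
  shows "(\<lambda>k. LINT x:{0..t}|lborel. h x * bump_kernel (n k) (a k) x) \<longlonglongrightarrow> h p"
  unfolding tendsto_iff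
proof (intro allI impI)
  fix r :: real assume r: "r > 0"
  obtain \<delta> where \<delta>: "\<delta> > 0" "\<And>x. x \<in> {0..t} \<Longrightarrow> dist x p < \<delta> \<Longrightarrow> dist (h x) (h p) < r / 2"
    using h p r unfolding continuous_on_iff by (metis half_gt_zero)
  have "eventually (\<lambda>k. dist (1 / n k) 0 < \<delta>) sequentially"
    using n \<delta>(1) unfolding tendsto_iff by blast
  then show "eventually (\<lambda>k. dist (LINT x:{0..t}|lborel. h x * bump_kernel (n k) (a k) x) (h p) < r)
      sequentially"
  proof eventually_elim
    case (elim k)
    have ak: "0 < n k" "0 \<le> a k" "a k + 1 / n k \<le> t" "a k \<le> p" "p \<le> a k + 1 / n k"
      using a[of k] by auto
    have "\<bar>h x - h p\<bar> \<le> r / 2" if x: "x \<in> {a k..a k + 1 / n k}" for x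
    proof -
      have "x \<in> {0..t}" "dist x p < \<delta>"
        using x ak elim by (auto simp: dist_real_def)
      then show ?thesis
        using \<delta>(2)[of x] by (simp add: dist_real_def)
    qed
    then have "\<bar>(LINT x:{0..t}|lborel. h x * bump_kernel (n k) (a k) x) - h p\<bar> \<le> r / 2"
      using ak by (intro bump_kernel_integral_approx[OF h]) auto
    then show ?case
      using r by (simp add: dist_real_def)
  qed
qed

section \<open>Weak derivatives of continuous functions\<close>

lemma tendsto_set_integral_mult_bounded:
  fixes g :: "real \<Rightarrow> real"
  assumes g: "set_integrable lborel A g"
    and [measurable]: "\<And>k. \<phi> k \<in> borel_measurable lborel" "\<psi> \<in> borel_measurable lborel"
    and lim: "\<And>x. (\<lambda>k. \<phi> k x) \<longlonglongrightarrow> \<psi> x" and bound: "\<And>k x. \<bar>\<phi> k x\<bar> \<le> 1"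
  shows "(\<lambda>k. LINT x:A|lborel. g x * \<phi> k x) \<longlonglongrightarrow> (LINT x:A|lborel. g x * \<psi> x)"
proof -
  have [measurable]: "(\<lambda>x. indicator A x * g x) \<in> borel_measurable lborel"
    using g unfolding set_integrable_def by (simp add: borel_measurable_integrable)
  have "(\<lambda>k. integral\<^sup>L lborel (\<lambda>x. indicator A x * g x * \<phi> k x))
      \<longlonglongrightarrow> integral\<^sup>L lborel (\<lambda>x. indicator A x * g x * \<psi> x)"
  proof (rule integral_dominated_convergence[where w = "\<lambda>x. \<bar>indicator A x * g x\<bar>"])
    show "integrable lborel (\<lambda>x. \<bar>indicator A x * g x\<bar>)"
      using g unfolding set_integrable_def by simp
    show "AE x in lborel. (\<lambda>k. indicator A x * g x * \<phi> k x) \<longlonglongrightarrow> indicator A x * g x * \<psi> x"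
      using lim by (intro AE_I2 tendsto_mult tendsto_const)
    fix k
    show "AE x in lborel. norm (indicator A x * g x * \<phi> k x) \<le> \<bar>indicator A x * g x\<bar>"
      using bound by (intro AE_I2) (simp add: abs_mult mult_left_le)
  qed measurable
  then show ?thesis
    by (simp add: set_lebesgue_integral_def mult_ac)
qed

lemma weak_deriv_plateau:
  assumes h: "continuous_on {0..t} h" and g: "weak_deriv t h g"
    and cd: "0 < c" "c < d" "d < t" and n: "0 < n" "1 \<le> n * (d - c)"
  shows "(LINT x:{0..t}|lborel. h x * bump_kernel n c x)
      - (LINT x:{0..t}|lborel. h x * bump_kernel n (d - 1 / n) x)
      = - (LINT x:{0..t}|lborel. g x * plateau c d n x)"
proof -
  have hK: "set_integrable lborel {0..t} (\<lambda>x. h x * bump_kernel n a x)" for a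
    by (intro borel_integrable_atLeastAtMost' continuous_intros h continuous_on_bump_kernel)
  have "(LINT x:{0..t}|lborel. h x * deriv (plateau c d n) x)
      = - (LINT x:{0..t}|lborel. g x * plateau c d n x)"
    using g plateau_test_fun[OF cd n] by (simp add: weak_deriv_def)
  moreover have "(\<lambda>x. h x * deriv (plateau c d n) x)
      = (\<lambda>x. h x * bump_kernel n c x - h x * bump_kernel n (d - 1 / n) x)"
    by (simp add: deriv_plateau algebra_simps)
  ultimately show ?thesis
    using set_integral_diff(2)[OF hK hK] by simp
qed

lemma plateau_sequence:
  assumes "c < d"
  obtains n :: "nat \<Rightarrow> real"
  where "\<And>k. 0 < n k" "\<And>k. 1 \<le> n k * (d - c)" "(\<lambda>k. 1 / n k) \<longlonglongrightarrow> 0"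
    "\<And>x. (\<lambda>k. plateau c d (n k) x) \<longlonglongrightarrow> indicator {c<..<d} x"
proof -
  obtain N :: nat where N: "1 / (d - c) < real N"
    using reals_Archimedean2 by blast
  define n where "n k = real (k + N)" for k
  have n: "0 < n k" "1 \<le> n k * (d - c)" for k
  proof -
    have "0 < 1 / (d - c)" "1 / (d - c) < n k"
      using N assms by (auto simp: n_def)
    then show "0 < n k"
      by linarith
    with \<open>1 / (d - c) < n k\<close> show "1 \<le> n k * (d - c)"
      using assms by (simp add: field_simps)
  qed
  moreover have "(\<lambda>k. 1 / n k) \<longlonglongrightarrow> 0"
    unfolding n_def by (rule LIMSEQ_ignore_initial_segment[OF lim_inverse_n'])
  moreover have "(\<lambda>k. plateau c d (n k) x) \<longlonglongrightarrow> indicator {c<..<d} x" for x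
    unfolding n_def using LIMSEQ_ignore_initial_segment[OF plateau_tendsto_indicator[OF assms]]
    by fastforce
  ultimately show ?thesis
    using that by blast
qed

lemma weak_deriv_integral_interior:
  assumes h: "continuous_on {0..t} h" and g: "weak_deriv t h g"
    and cd: "0 < c" "c < d" "d < t"
  shows "h d - h c = (LINT u:{0..t}|lborel. g u * indicator {c<..<d} u)"
proof -
  obtain n where n: "\<And>k. 0 < n k" "\<And>k. 1 \<le> n k * (d - c)" and n_lim: "(\<lambda>k. 1 / n k) \<longlonglongrightarrow> 0"
    and plateau_lim: "\<And>x. (\<lambda>k. plateau c d (n k) x) \<longlonglongrightarrow> indicator {c<..<d} x"
    using plateau_sequence[OF cd(2)] by blast
  have n_le: "1 / n k \<le> d - c" for k
    using n[of k] by (simp add: field_simps)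
  have "0 < n k \<and> 0 \<le> c \<and> c + 1 / n k \<le> t \<and> c \<le> c \<and> c \<le> c + 1 / n k" for k
    using n(1)[of k] n_le[of k] cd by auto
  from tendsto_bump_kernel_integral[OF h _ this n_lim]
  have lim_c: "(\<lambda>k. LINT x:{0..t}|lborel. h x * bump_kernel (n k) c x) \<longlonglongrightarrow> h c"
    using cd by simp
  have "0 < n k \<and> 0 \<le> d - 1 / n k \<and> d - 1 / n k + 1 / n k \<le> t \<and> d - 1 / n k \<le> d
      \<and> d \<le> d - 1 / n k + 1 / n k" for k
    using n(1)[of k] n_le[of k] cd by auto
  from tendsto_bump_kernel_integral[OF h _ this n_lim]
  have lim_d: "(\<lambda>k. LINT x:{0..t}|lborel. h x * bump_kernel (n k) (d - 1 / n k) x) \<longlonglongrightarrow> h d"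
    using cd by simp
  have lim_g: "(\<lambda>k. LINT x:{0..t}|lborel. g x * plateau c d (n k) x)
      \<longlonglongrightarrow> (LINT x:{0..t}|lborel. g x * indicator {c<..<d} x)"
  proof (rule tendsto_set_integral_mult_bounded)
    show "set_integrable lborel {0..t} g"
      using g by (simp add: weak_deriv_def)
    show "plateau c d (n k) \<in> borel_measurable lborel" for k
      using borel_measurable_continuous_onI[OF continuous_on_plateau] by simp
    show "(\<lambda>k. plateau c d (n k) x) \<longlonglongrightarrow> indicator {c<..<d} x" for x
      by (rule plateau_lim)
    show "\<bar>plateau c d (n k) x\<bar> \<le> 1" for k x
      using plateau_bounds[OF n] by auto
  qed measurable
  have "(\<lambda>k. - (LINT x:{0..t}|lborel. g x * plateau c d (n k) x)) \<longlonglongrightarrow> h c - h d"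
    using tendsto_diff[OF lim_c lim_d] unfolding weak_deriv_plateau[OF h g cd n] .
  with tendsto_minus[OF lim_g]
  have "h c - h d = - (LINT x:{0..t}|lborel. g x * indicator {c<..<d} x)"
    using LIMSEQ_unique by blast
  then show ?thesis
    by simp
qed

lemma tendsto_indicator_shrinking_Ioo:
  fixes c d x :: real
  assumes "\<And>k. 0 < \<delta> k" "\<delta> \<longlonglongrightarrow> 0"
  shows "(\<lambda>k. indicator {c + \<delta> k<..<d - \<delta> k} x :: real) \<longlonglongrightarrow> indicator {c<..<d} x"
proof (cases "x \<in> {c<..<d}")
  case True
  have "0 < min (x - c) (d - x)"
    using True by auto
  with assms(2) have "eventually (\<lambda>k. dist (\<delta> k) 0 < min (x - c) (d - x)) sequentially"
    unfolding tendsto_iff by blast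
  then have "eventually (\<lambda>k. indicator {c + \<delta> k<..<d - \<delta> k} x = (indicator {c<..<d} x :: real))
      sequentially"
    by eventually_elim (use True in \<open>auto simp: dist_real_def indicator_def\<close>)
  then show ?thesis
    by (rule tendsto_eventually)
next
  case False
  then have "indicator {c + \<delta> k<..<d - \<delta> k} x = (indicator {c<..<d} x :: real)" for k
    using assms(1)[of k] by auto
  then show ?thesis
    by simp
qed

lemma weak_deriv_integral:
  assumes h: "continuous_on {0..t} h" and g: "weak_deriv t h g"
    and cd: "0 \<le> c" "c \<le> d" "d \<le> t"
  shows "h d - h c = (LINT u:{0..t}|lborel. g u * indicator {c<..<d} u)"
proof (cases "c = d")
  case False
  then have "c < d"
    using cd by simp
  define \<delta> where "\<delta> k = (d - c) * (1 / real (k + 3))" for k :: nat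
  have \<delta>: "0 < \<delta> k" "2 * \<delta> k < d - c" for k
  proof -
    have "(d - c) * 2 < (d - c) * real (k + 3)"
      using \<open>c < d\<close> by (intro mult_strict_left_mono) auto
    then show "0 < \<delta> k" "2 * \<delta> k < d - c"
      using \<open>c < d\<close> by (simp_all add: \<delta>_def field_simps)
  qed
  have "(\<lambda>k. 1 / real (k + 3)) \<longlonglongrightarrow> 0"
    by (rule LIMSEQ_ignore_initial_segment[OF lim_inverse_n'])
  then have \<delta>_lim: "\<delta> \<longlonglongrightarrow> 0"
    unfolding \<delta>_def by (rule tendsto_mult_right_zero)
  have in_range: "c + \<delta> k \<in> {0..t}" "d - \<delta> k \<in> {0..t}" for k
    using \<delta>[of k] cd by auto
  have "(\<lambda>k. h (d - \<delta> k) - h (c + \<delta> k)) \<longlonglongrightarrow> h d - h c"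
  proof (intro tendsto_diff continuous_on_tendsto_compose[OF h] always_eventually allI)
    show "(\<lambda>k. d - \<delta> k) \<longlonglongrightarrow> d" "(\<lambda>k. c + \<delta> k) \<longlonglongrightarrow> c"
      using tendsto_diff[OF tendsto_const \<delta>_lim, of d] tendsto_add[OF tendsto_const \<delta>_lim, of c]
      by simp_all
  qed (use in_range cd in auto)
  moreover have "(\<lambda>k. LINT u:{0..t}|lborel. g u * indicator {c + \<delta> k<..<d - \<delta> k} u)
      \<longlonglongrightarrow> (LINT u:{0..t}|lborel. g u * indicator {c<..<d} u)"
    using g \<delta>(1) \<delta>_lim
    by (intro tendsto_set_integral_mult_bounded tendsto_indicator_shrinking_Ioo)
      (auto simp: weak_deriv_def indicator_def)
  moreover have "h (d - \<delta> k) - h (c + \<delta> k)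
      = (LINT u:{0..t}|lborel. g u * indicator {c + \<delta> k<..<d - \<delta> k} u)" for k
    using weak_deriv_integral_interior[OF h g] \<delta>[of k] cd by simp
  ultimately show ?thesis
    using LIMSEQ_unique by simp
qed simp

lemma emeasure_density_Ioi:
  fixes q :: "real \<Rightarrow> real"
  assumes q: "integrable lborel q" "\<And>x. 0 \<le> q x"
  shows "emeasure (density lborel (\<lambda>x. ennreal (q x))) {a<..}
    = ennreal (integral\<^sup>L lborel (\<lambda>x. q x * indicator {a<..} x))"
proof -
  have [measurable]: "q \<in> borel_measurable lborel"
    using q(1) by (rule borel_measurable_integrable)
  have "emeasure (density lborel (\<lambda>x. ennreal (q x))) {a<..}
      = (\<integral>\<^sup>+ x. ennreal (q x) * indicator {a<..} x \<partial>lborel)"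
    by (rule emeasure_density) auto
  also have "\<dots> = (\<integral>\<^sup>+ x. ennreal (q x * indicator {a<..} x) \<partial>lborel)"
    by (intro nn_integral_cong) (auto simp: indicator_def)
  also have "\<dots> = ennreal (integral\<^sup>L lborel (\<lambda>x. q x * indicator {a<..} x))"
    by (rule nn_integral_eq_integral) (use q in \<open>auto intro: integrable_real_mult_indicator\<close>)
  finally show ?thesis .
qed

text \<open>The positive and negative parts of \<open>f\<close> have densities that agree on all rays, hence
  coincide.\<close>

lemma AE_eq_0_if_integrals_on_rays_eq_0:
  fixes f :: "real \<Rightarrow> real"
  assumes f: "integrable lborel f"
    and rays: "\<And>a. integral\<^sup>L lborel (\<lambda>x. f x * indicator {a<..} x) = 0"
  shows "AE x in lborel. f x = 0"
proof -
  have [measurable]: "f \<in> borel_measurable lborel"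
    using f by (rule borel_measurable_integrable)
  define fp where "fp x = max 0 (f x)" for x
  define fn where "fn x = max 0 (- f x)" for x
  have fp: "integrable lborel fp" and fn: "integrable lborel fn"
    unfolding fp_def fn_def using f by auto
  have [measurable]: "fp \<in> borel_measurable lborel" "fn \<in> borel_measurable lborel"
    using fp fn by (auto intro: borel_measurable_integrable)
  have "density lborel (\<lambda>x. ennreal (fp x)) = density lborel (\<lambda>x. ennreal (fn x))"
  proof (rule measure_eqI_lessThan)
    fix a
    show "emeasure (density lborel (\<lambda>x. ennreal (fp x))) {a<..} < \<infinity>"
      using emeasure_density_Ioi[OF fp, of a] by (simp add: fp_def)
    have "integrable lborel (\<lambda>x. fp x * indicator {a<..} x)"
      "integrable lborel (\<lambda>x. fn x * indicator {a<..} x)"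
      using fp fn by (auto intro: integrable_real_mult_indicator)
    moreover have "f x = fp x - fn x" for x
      by (simp add: fp_def fn_def)
    ultimately have "integral\<^sup>L lborel (\<lambda>x. fp x * indicator {a<..} x)
        - integral\<^sup>L lborel (\<lambda>x. fn x * indicator {a<..} x)
        = integral\<^sup>L lborel (\<lambda>x. f x * indicator {a<..} x)"
      by (simp add: left_diff_distrib)
    then have "integral\<^sup>L lborel (\<lambda>x. fp x * indicator {a<..} x)
        = integral\<^sup>L lborel (\<lambda>x. fn x * indicator {a<..} x)"
      using rays[of a] by simp
    then show "emeasure (density lborel (\<lambda>x. ennreal (fp x))) {a<..}
        = emeasure (density lborel (\<lambda>x. ennreal (fn x))) {a<..}"
      using emeasure_density_Ioi[OF fp, of a] emeasure_density_Ioi[OF fn, of a] by (simp add: fp_def fn_def)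
  qed simp_all
  then have "AE x in lborel. ennreal (fp x) = ennreal (fn x)"
    by (subst (asm) sigma_finite_measure.density_unique_iff[OF lborel.sigma_finite_measure_axioms])
      auto
  then show ?thesis
    by eventually_elim (simp add: fp_def fn_def max_def split: if_splits)
qed

lemma weak_deriv_unique_AE:
  assumes h: "continuous_on {0..t} h" and g1: "weak_deriv t h g1" and g2: "weak_deriv t h g2"
    and t: "0 \<le> t"
  shows "AE x in lborel. x \<in> {0..t} \<longrightarrow> g1 x = g2 x"
proof -
  define f where "f x = indicator {0..t} x * (g1 x - g2 x)" for x
  have gi: "integrable lborel (\<lambda>x. indicator {0..t} x * g x)" if "weak_deriv t h g" for g
    using that by (simp add: weak_deriv_def set_integrable_def)
  have f: "integrable lborel f"
    unfolding f_def using Bochner_Integration.integrable_diff[OF gi[OF g1] gi[OF g2]]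
    by (simp add: algebra_simps)
  have "integral\<^sup>L lborel (\<lambda>x. f x * indicator {a<..} x) = 0" for a
  proof (cases "a < t")
    case True
    define c where "c = max a 0"
    have c: "0 \<le> c" "c \<le> t"
      using True t by (auto simp: c_def)
    have "AE x in lborel. f x * indicator {a<..} x = f x * indicator {c<..<t} x"
      using AE_lborel_singleton[of 0] AE_lborel_singleton[of t]
      by eventually_elim (auto simp: f_def indicator_def c_def)
    then have "integral\<^sup>L lborel (\<lambda>x. f x * indicator {a<..} x)
        = integral\<^sup>L lborel (\<lambda>x. f x * indicator {c<..<t} x)"
      using f by (intro integral_cong_AE) (auto intro: borel_measurable_integrable)
    also have "\<dots> = (LINT u:{0..t}|lborel. g1 u * indicator {c<..<t} u)
        - (LINT u:{0..t}|lborel. g2 u * indicator {c<..<t} u)"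
    proof -
      have "integrable lborel (\<lambda>x. indicator {0..t} x * g x * indicator {c<..<t} x)"
        if "weak_deriv t h g" for g
        using gi[OF that] by (intro integrable_real_mult_indicator) simp_all
      from Bochner_Integration.integral_diff[OF this[OF g1] this[OF g2]] show ?thesis
        by (simp add: f_def set_lebesgue_integral_def algebra_simps)
    qed
    also have "\<dots> = 0"
      using weak_deriv_integral[OF h g1 c order_refl] weak_deriv_integral[OF h g2 c order_refl]
      by simp
    finally show ?thesis .
  next
    case False
    then have "(\<lambda>x. f x * indicator {a<..} x) = (\<lambda>x. 0)"
      by (auto simp: f_def indicator_def)
    then show ?thesis
      by simp
  qed
  from AE_eq_0_if_integrals_on_rays_eq_0[OF f this] show ?thesis
    by eventually_elim (auto simp: f_def)
qed

section \<open>Estimates on the unit ball of the Sobolev space\<close>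

abbreviation sobolev_unit_ball :: "real \<Rightarrow> nat \<Rightarrow> (real \<Rightarrow> real) set" where
  "sobolev_unit_ball t m \<equiv> {h \<in> sobolev t m. sob_norm t m h \<le> 1}"

lemma set_integral_eq_if_AE_eq:
  fixes f g :: "real \<Rightarrow> real"
  assumes "set_integrable lborel A f" "set_integrable lborel A g"
    and "AE x in lborel. x \<in> A \<longrightarrow> f x = g x"
  shows "(LINT x:A|lborel. f x) = (LINT x:A|lborel. g x)"
  unfolding set_lebesgue_integral_def
proof (rule integral_cong_AE)
  show "(\<lambda>x. indicator A x *\<^sub>R f x) \<in> borel_measurable lborel"
    "(\<lambda>x. indicator A x *\<^sub>R g x) \<in> borel_measurable lborel"
    using assms(1,2) by (auto simp: set_integrable_def intro: borel_measurable_integrable)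
  show "AE x in lborel. indicator A x *\<^sub>R f x = indicator A x *\<^sub>R g x"
    using assms(3) by eventually_elim (auto simp: indicator_def)
qed

lemma set_integral_square_nonneg: "0 \<le> (LINT u:A|lborel. (f u)\<^sup>2 :: real)"
  unfolding set_lebesgue_integral_def
  by (rule Bochner_Integration.integral_nonneg) (auto simp: indicator_def)

lemma weak_deriv_wderiv:
  assumes "h \<in> sobolev t m" "1 \<le> m"
  shows "weak_deriv t h (wderiv t h)"
proof -
  obtain D where "sob_derivs t m h D"
    using assms(1) by (auto simp: sobolev_def)
  then have "weak_deriv t h (D 1)"
    using assms(2) by (auto simp: sob_derivs_def)
  then show ?thesis
    unfolding wderiv_def by (rule someI[of "weak_deriv t h"])
qed

lemma sobolev_unit_ball_L2:
  assumes h: "h \<in> sobolev_unit_ball t m" and m: "1 \<le> m" and t: "0 \<le> t"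
  shows "set_integrable lborel {0..t} (\<lambda>u. (h u)\<^sup>2)" "(LINT u:{0..t}|lborel. (h u)\<^sup>2) \<le> 1"
    and "set_integrable lborel {0..t} (\<lambda>u. (wderiv t h u)\<^sup>2)"
    and "(LINT u:{0..t}|lborel. (wderiv t h u)\<^sup>2) \<le> 1"
proof -
  define D where "D = (SOME D. sob_derivs t m h D)"
  have "\<exists>D. sob_derivs t m h D"
    using h by (simp add: sobolev_def)
  then have "sob_derivs t m h D"
    unfolding D_def by (rule someI_ex)
  then have D0: "D 0 = h" and D1: "weak_deriv t h (D 1)"
    and D_L2: "\<And>k. k \<le> m \<Longrightarrow> set_integrable lborel {0..t} (\<lambda>u. (D k u)\<^sup>2)"
    using m by (auto simp: sob_derivs_def)
  have "(\<Sum>k\<in>{0, 1}. LINT u:{0..t}|lborel. (D k u)\<^sup>2) \<le> (\<Sum>k\<le>m. LINT u:{0..t}|lborel. (D k u)\<^sup>2)"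
    by (rule sum_mono2) (use m in \<open>auto intro: set_integral_square_nonneg\<close>)
  also have "\<dots> \<le> 1"
    using h by (simp add: sob_norm_def D_def Let_def)
  finally have D_le: "(LINT u:{0..t}|lborel. (D 0 u)\<^sup>2) \<le> 1" "(LINT u:{0..t}|lborel. (D 1 u)\<^sup>2) \<le> 1"
    using set_integral_square_nonneg[of "{0..t}" "D 0"] set_integral_square_nonneg[of "{0..t}" "D 1"]
    by simp_all
  then show "set_integrable lborel {0..t} (\<lambda>u. (h u)\<^sup>2)" "(LINT u:{0..t}|lborel. (h u)\<^sup>2) \<le> 1"
    using D0 D_L2[of 0] by auto
  have "continuous_on {0..t} h" "weak_deriv t h (wderiv t h)"
    using h m weak_deriv_wderiv by (auto simp: sobolev_def)
  from weak_deriv_unique_AE[OF this D1 t]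
  have ae: "AE u in lborel. u \<in> {0..t} \<longrightarrow> (wderiv t h u)\<^sup>2 = (D 1 u)\<^sup>2"
    by eventually_elim simp
  have "(\<lambda>u. indicator {0..t} u * wderiv t h u) \<in> borel_measurable lborel"
    using \<open>weak_deriv t h (wderiv t h)\<close>
    by (auto simp: weak_deriv_def set_integrable_def intro: borel_measurable_integrable)
  then have "(\<lambda>u. (indicator {0..t} u * wderiv t h u)\<^sup>2) \<in> borel_measurable lborel"
    by measurable
  moreover have "(\<lambda>u. (indicator {0..t} u * wderiv t h u)\<^sup>2)
      = (\<lambda>u. indicator {0..t} u *\<^sub>R (wderiv t h u)\<^sup>2)"
    by (auto simp: indicator_def fun_eq_iff)
  ultimately have "set_borel_measurable lborel {0..t} (\<lambda>u. (wderiv t h u)\<^sup>2)"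
    by (simp add: set_borel_measurable_def)
  moreover have "AE u in lborel. u \<in> {0..t} \<longrightarrow> norm ((wderiv t h u)\<^sup>2) \<le> norm ((D 1 u)\<^sup>2)"
    using ae by eventually_elim simp
  ultimately show L2: "set_integrable lborel {0..t} (\<lambda>u. (wderiv t h u)\<^sup>2)"
    by (rule set_integrable_bound[OF D_L2[OF m]])
  show "(LINT u:{0..t}|lborel. (wderiv t h u)\<^sup>2) \<le> 1"
    using set_integral_eq_if_AE_eq[OF L2 D_L2[OF m] ae] D_le(2) by linarith
qed

lemma set_integrable_mult_indicator:
  fixes f :: "real \<Rightarrow> real"
  assumes "set_integrable lborel A f" "B \<in> sets lborel"
  shows "set_integrable lborel A (\<lambda>u. f u * indicator B u)"
proof -
  have "integrable lborel (\<lambda>u. (indicator A u *\<^sub>R f u) * indicator B u)"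
    using assms by (intro integrable_real_mult_indicator) (simp_all add: set_integrable_def)
  then show ?thesis
    unfolding set_integrable_def by (simp add: mult_ac)
qed

lemma set_integral_indicator_Ioo:
  fixes a b t :: real
  assumes "0 \<le> a" "a \<le> b" "b \<le> t"
  shows "(LINT u:{0..t}|lborel. indicator {a<..<b} u) = b - a"
proof -
  have "(LINT u:{0..t}|lborel. indicator {a<..<b} u)
      = integral\<^sup>L lborel (indicator {a<..<b} :: real \<Rightarrow> real)"
    unfolding set_lebesgue_integral_def using assms
    by (intro Bochner_Integration.integral_cong) (auto simp: indicator_def)
  then show ?thesis
    using assms by (simp add: measure_def)
qed

lemma abs_integral_le_sqrt_length:
  fixes g :: "real \<Rightarrow> real"
  assumes g: "set_integrable lborel {0..t} g" and g2: "set_integrable lborel {0..t} (\<lambda>u. (g u)\<^sup>2)"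
    and g2_le: "(LINT u:{0..t}|lborel. (g u)\<^sup>2) \<le> 1" and ab: "0 \<le> a" "a \<le> b" "b \<le> t"
  shows "(LINT u:{0..t}|lborel. \<bar>g u\<bar> * indicator {a<..<b} u) \<le> sqrt (b - a)"
proof (cases "a = b")
  case False
  define s where "s = sqrt (b - a)"
  have s: "0 < s" "s * s = b - a"
    using False ab by (auto simp: s_def)
  have "set_integrable lborel {0..t} (\<lambda>u. 1 * indicator {a<..<b} u :: real)"
    by (intro set_integrable_mult_indicator borel_integrable_atLeastAtMost') auto
  then have ind: "set_integrable lborel {0..t} (\<lambda>u. indicator {a<..<b} u :: real)"
    by simp
  have "set_integrable lborel {0..t} (\<lambda>u. \<bar>g u\<bar> * indicator {a<..<b} u)"
    using set_integrable_abs[OF g] by (rule set_integrable_mult_indicator) simp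
  moreover have "set_integrable lborel {0..t}
      (\<lambda>u. 1 / (2 * s) * indicator {a<..<b} u + s / 2 * (g u)\<^sup>2)"
    using ind g2 by (intro set_integral_add set_integrable_mult_right)
  moreover have "\<bar>g u\<bar> * indicator {a<..<b} u \<le> 1 / (2 * s) * indicator {a<..<b} u + s / 2 * (g u)\<^sup>2"
    for u
  proof -
    \<comment> \<open>AM-GM: \<open>2 s \<bar>g\<bar> \<le> 1 + s\<^sup>2 g\<^sup>2\<close>\<close>
    have "0 \<le> (1 - s * \<bar>g u\<bar>)\<^sup>2"
      by simp
    then have "\<bar>g u\<bar> \<le> 1 / (2 * s) + s / 2 * (g u)\<^sup>2"
      using s(1) by (simp add: field_simps power2_eq_square)
    moreover have "0 \<le> s / 2 * (g u)\<^sup>2"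
      using s by simp
    ultimately show ?thesis
      by (auto simp: indicator_def)
  qed
  ultimately have "(LINT u:{0..t}|lborel. \<bar>g u\<bar> * indicator {a<..<b} u)
      \<le> (LINT u:{0..t}|lborel. 1 / (2 * s) * indicator {a<..<b} u + s / 2 * (g u)\<^sup>2)"
    by (rule set_integral_mono)
  also have "\<dots> = 1 / (2 * s) * (LINT u:{0..t}|lborel. indicator {a<..<b} u)
      + s / 2 * (LINT u:{0..t}|lborel. (g u)\<^sup>2)"
    using ind g2 by simp
  also have "(LINT u:{0..t}|lborel. indicator {a<..<b} u) = b - a"
    using ab by (rule set_integral_indicator_Ioo)
  also have "1 / (2 * s) * (b - a) + s / 2 * (LINT u:{0..t}|lborel. (g u)\<^sup>2) \<le> s"
    using g2_le s by (simp add: s(2)[symmetric] field_simps)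
  finally show ?thesis
    by (simp add: s_def)
qed simp

lemma weak_deriv_holder:
  assumes h: "continuous_on {0..t} h" and g: "weak_deriv t h g"
    and g2: "set_integrable lborel {0..t} (\<lambda>u. (g u)\<^sup>2)" "(LINT u:{0..t}|lborel. (g u)\<^sup>2) \<le> 1"
    and ab: "0 \<le> a" "a \<le> b" "b \<le> t"
  shows "\<bar>h b - h a\<bar> \<le> sqrt (b - a)"
proof -
  have gi: "set_integrable lborel {0..t} g"
    using g by (simp add: weak_deriv_def)
  have "set_integrable lborel {0..t} (\<lambda>u. g u * indicator {a<..<b} u)"
    using gi by (rule set_integrable_mult_indicator) simp
  from set_integral_norm_bound[OF this]
  have "\<bar>h b - h a\<bar> \<le> (LINT u:{0..t}|lborel. \<bar>g u\<bar> * indicator {a<..<b} u)"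
    using weak_deriv_integral[OF h g ab] by (simp add: abs_mult)
  also have "\<dots> \<le> sqrt (b - a)"
    by (rule abs_integral_le_sqrt_length[OF gi g2 ab])
  finally show ?thesis .
qed

definition sobolev_embedding_const :: "real \<Rightarrow> real" where
  "sobolev_embedding_const t = (1 + 1 / t) / 2 + sqrt t"

lemma abs_le_sobolev_embedding_const:
  assumes t: "0 < t" and h: "continuous_on {0..t} h"
    and h2: "set_integrable lborel {0..t} (\<lambda>u. (h u)\<^sup>2)" "(LINT u:{0..t}|lborel. (h u)\<^sup>2) \<le> 1"
    and holder: "\<And>a b. 0 \<le> a \<Longrightarrow> a \<le> b \<Longrightarrow> b \<le> t \<Longrightarrow> \<bar>h b - h a\<bar> \<le> sqrt (b - a)"
    and x: "x \<in> {0..t}"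
  shows "\<bar>h x\<bar> \<le> sobolev_embedding_const t"
proof -
  have "continuous_on {0..t} (\<lambda>u. (h u)\<^sup>2)"
    by (intro continuous_intros h)
  then obtain y where y: "y \<in> {0..t}" "\<And>u. u \<in> {0..t} \<Longrightarrow> (h y)\<^sup>2 \<le> (h u)\<^sup>2"
    using continuous_attains_inf[of "{0..t}" "\<lambda>u. (h u)\<^sup>2"] t by auto
  have "t * (h y)\<^sup>2 = (LINT u:{0..t}|lborel. (h y)\<^sup>2)"
    using t by (simp add: set_integral_const measure_def)
  also have "\<dots> \<le> (LINT u:{0..t}|lborel. (h u)\<^sup>2)"
    by (rule set_integral_mono[OF _ h2(1)]) (use y in \<open>auto intro: borel_integrable_atLeastAtMost'\<close>)
  finally have "t * (h y)\<^sup>2 \<le> 1"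
    using h2(2) by linarith
  then have "(h y)\<^sup>2 \<le> 1 / t"
    using t by (simp add: field_simps mult.commute)
  moreover have "2 * \<bar>h y\<bar> \<le> 1 + (h y)\<^sup>2"
    using zero_le_power2[of "1 - \<bar>h y\<bar>"] by (simp add: power2_diff)
  ultimately have hy: "\<bar>h y\<bar> \<le> (1 + 1 / t) / 2"
    by simp
  have "\<bar>h x - h y\<bar> \<le> sqrt t"
  proof (cases "y \<le> x")
    case True
    then have "\<bar>h x - h y\<bar> \<le> sqrt (x - y)"
      using holder x y by simp
    also have "\<dots> \<le> sqrt t"
      using x y by simp
    finally show ?thesis .
  next
    case False
    then have "\<bar>h y - h x\<bar> \<le> sqrt (y - x)"
      using holder x y by simp
    also have "\<dots> \<le> sqrt t"
      using x y by simp
    finally show ?thesis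
      by (simp add: abs_minus_commute)
  qed
  with hy show ?thesis
    unfolding sobolev_embedding_const_def by linarith
qed

lemma sobolev_unit_ball_holder:
  assumes h: "h \<in> sobolev_unit_ball t m" and m: "1 \<le> m" and ab: "0 \<le> a" "a \<le> b" "b \<le> t"
  shows "\<bar>h b - h a\<bar> \<le> sqrt (b - a)"
proof (rule weak_deriv_holder[OF _ weak_deriv_wderiv _ _ ab])
  show "continuous_on {0..t} h" "h \<in> sobolev t m"
    using h by (simp_all add: sobolev_def)
  show "set_integrable lborel {0..t} (\<lambda>u. (wderiv t h u)\<^sup>2)"
    "(LINT u:{0..t}|lborel. (wderiv t h u)\<^sup>2) \<le> 1"
    using sobolev_unit_ball_L2(3,4)[OF h m] ab by simp_all
qed (rule m)

lemma sobolev_unit_ball_abs_le: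
  assumes h: "h \<in> sobolev_unit_ball t m" and m: "1 \<le> m" and t: "0 < t" and x: "x \<in> {0..t}"
  shows "\<bar>h x\<bar> \<le> sobolev_embedding_const t"
  using h t sobolev_unit_ball_L2(1,2)[OF h m] sobolev_unit_ball_holder[OF h m] x
  by (intro abs_le_sobolev_embedding_const) (auto simp: sobolev_def)

lemma sobolev_unit_ball_wderiv_integral:
  assumes h: "h \<in> sobolev_unit_ball t m" and m: "1 \<le> m" and ab: "0 \<le> a" "a \<le> b" "b \<le> t"
  shows "(LINT u:{0..t}|lborel. \<bar>wderiv t h u\<bar> * indicator {a<..<b} u) \<le> sqrt (b - a)"
  using h m ab weak_deriv_wderiv[of h t m]
  by (intro abs_integral_le_sqrt_length sobolev_unit_ball_L2(3,4)) (auto simp: weak_deriv_def)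

section \<open>Cadlag paths\<close>

lemma cadlag_tendsto_left_lim:
  assumes "cadlag_on t Z" "s \<in> {0<..t}"
  shows "(Z \<longlongrightarrow> left_lim Z s) (at_left s)"
proof -
  obtain l where l: "(Z \<longlongrightarrow> l) (at_left s)"
    using assms unfolding cadlag_on_def by blast
  then have "Lim (at_left s) Z = l"
    by (intro tendsto_Lim) auto
  then show ?thesis
    using l assms by (simp add: left_lim_def)
qed

lemma cadlag_bounded_right_of:
  assumes Z: "cadlag_on t Z" and x: "x \<in> {0..t}"
  obtains b where "x < b" "\<forall>y. x < y \<and> y < b \<and> y \<le> t \<longrightarrow> \<bar>Z y\<bar> \<le> \<bar>Z x\<bar> + 1"
proof (cases "x < t")
  case True
  then have "(Z \<longlongrightarrow> Z x) (at_right x)"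
    using Z x by (simp add: cadlag_on_def continuous_within)
  then have "eventually (\<lambda>y. dist (Z y) (Z x) < 1) (at_right x)"
    unfolding tendsto_iff by simp
  then obtain b where b: "x < b" "\<forall>y>x. y < b \<longrightarrow> dist (Z y) (Z x) < 1"
    unfolding eventually_at_right_field by blast
  then have "\<forall>y. x < y \<and> y < b \<and> y \<le> t \<longrightarrow> \<bar>Z y\<bar> \<le> \<bar>Z x\<bar> + 1"
    by (auto simp: dist_real_def)
  with b(1) show ?thesis
    by (rule that)
next
  case False
  then show ?thesis
    using that[of "x + 1"] x by auto
qed

lemma cadlag_bounded_left_of:
  assumes Z: "cadlag_on t Z" and x: "x \<in> {0..t}"
  obtains b B where "b < x" "\<forall>y. b < y \<and> y < x \<and> 0 \<le> y \<longrightarrow> \<bar>Z y\<bar> \<le> B"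
proof (cases "0 < x")
  case True
  then have "(Z \<longlongrightarrow> left_lim Z x) (at_left x)"
    using cadlag_tendsto_left_lim[OF Z] x by simp
  then have "eventually (\<lambda>y. dist (Z y) (left_lim Z x) < 1) (at_left x)"
    unfolding tendsto_iff by simp
  then obtain b where b: "b < x" "\<forall>y>b. y < x \<longrightarrow> dist (Z y) (left_lim Z x) < 1"
    unfolding eventually_at_left_field by blast
  then have "\<forall>y. b < y \<and> y < x \<and> 0 \<le> y \<longrightarrow> \<bar>Z y\<bar> \<le> \<bar>left_lim Z x\<bar> + 1"
    by (auto simp: dist_real_def)
  with b(1) show ?thesis
    by (rule that)
next
  case False
  then show ?thesis
    using that[of "x - 1" 0] x by auto
qed

lemma cadlag_locally_bounded:
  assumes Z: "cadlag_on t Z" and x: "x \<in> {0..t}"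
  shows "\<exists>\<delta>>0. \<exists>B. \<forall>y\<in>{0..t}. dist y x < \<delta> \<longrightarrow> \<bar>Z y\<bar> \<le> B"
proof -
  obtain bR where bR: "x < bR" "\<forall>y. x < y \<and> y < bR \<and> y \<le> t \<longrightarrow> \<bar>Z y\<bar> \<le> \<bar>Z x\<bar> + 1"
    using cadlag_bounded_right_of[OF Z x] .
  obtain bL BL where bL: "bL < x" "\<forall>y. bL < y \<and> y < x \<and> 0 \<le> y \<longrightarrow> \<bar>Z y\<bar> \<le> BL"
    using cadlag_bounded_left_of[OF Z x] .
  define \<delta> where "\<delta> = min (bR - x) (x - bL)"
  have "\<delta> > 0"
    using bR bL by (simp add: \<delta>_def)
  moreover have "\<bar>Z y\<bar> \<le> max (\<bar>Z x\<bar> + 1) BL" if y: "y \<in> {0..t}" "dist y x < \<delta>" for y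
  proof -
    have "bL < y" "y < bR"
      using y by (auto simp: \<delta>_def dist_real_def)
    then show ?thesis
      using bR(2)[rule_format, of y] bL(2)[rule_format, of y] y
      by (cases "x < y"; cases "y < x") auto
  qed
  ultimately show ?thesis
    by blast
qed

lemma cadlag_bounded:
  assumes Z: "cadlag_on t Z"
  shows "\<exists>M\<ge>0. \<forall>y\<in>{0..t}. \<bar>Z y\<bar> \<le> M"
proof -
  obtain \<delta> B where \<delta>B: "\<And>x. x \<in> {0..t} \<Longrightarrow>
      \<delta> x > 0 \<and> (\<forall>y\<in>{0..t}. dist y x < \<delta> x \<longrightarrow> \<bar>Z y\<bar> \<le> B x)"
    using cadlag_locally_bounded[OF Z] by metis
  obtain C where C: "C \<subseteq> {0..t}" "finite C" "{0..t} \<subseteq> (\<Union>c\<in>C. ball c (\<delta> c))"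
  proof (rule compactE_image[of "{0..t}" "{0..t}" "\<lambda>c. ball c (\<delta> c)"])
    show "{0..t} \<subseteq> (\<Union>c\<in>{0..t}. ball c (\<delta> c))"
      using \<delta>B by force
  qed auto
  define M where "M = (\<Sum>c\<in>C. \<bar>B c\<bar>)"
  have "\<bar>Z y\<bar> \<le> M" if y: "y \<in> {0..t}" for y
  proof -
    obtain c where c: "c \<in> C" "y \<in> ball c (\<delta> c)"
      using C y by blast
    then have "\<bar>Z y\<bar> \<le> \<bar>B c\<bar>"
      using \<delta>B[of c] C y by (force simp: dist_commute)
    also have "\<dots> \<le> M"
      unfolding M_def using c C by (intro member_le_sum) auto
    finally show ?thesis .
  qed
  moreover have "M \<ge> 0"
    by (simp add: M_def sum_nonneg)
  ultimately show ?thesis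
    by blast
qed

lemma cadlag_left_lim_bounded:
  assumes Z: "cadlag_on t Z" and M: "\<forall>y\<in>{0..t}. \<bar>Z y\<bar> \<le> M" and y: "y \<in> {0..t}"
  shows "\<bar>left_lim Z y\<bar> \<le> M"
proof (cases "y \<le> 0")
  case True
  then show ?thesis
    using M y by (simp add: left_lim_def)
next
  case False
  then have "eventually (\<lambda>x. 0 < x \<and> x < y) (at_left y)"
    by (auto simp: eventually_at_left_field intro!: exI[of _ 0])
  then have "eventually (\<lambda>x. \<bar>Z x\<bar> \<le> M) (at_left y)"
    by eventually_elim (use M y in auto)
  moreover have "((\<lambda>x. \<bar>Z x\<bar>) \<longlongrightarrow> \<bar>left_lim Z y\<bar>) (at_left y)"
    using cadlag_tendsto_left_lim[OF Z] False y by (intro tendsto_rabs) auto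
  ultimately show ?thesis
    using False by (intro tendsto_upperbound) auto
qed

text \<open>The last point of the grid of mesh \<open>1 / (k + 1)\<close> strictly left of \<open>x\<close>: the step functions
  \<open>Z \<circ> left_grid k\<close> are measurable and converge pointwise to \<open>left_lim Z\<close>.\<close>

definition left_grid :: "nat \<Rightarrow> real \<Rightarrow> real" where
  "left_grid k x = (real_of_int \<lceil>real (Suc k) * x\<rceil> - 1) / real (Suc k)"

lemma left_grid_bounds: "x - 1 / real (Suc k) \<le> left_grid k x" "left_grid k x < x"
proof -
  have c: "real_of_int \<lceil>real (Suc k) * x\<rceil> - 1 < real (Suc k) * x"
    "real (Suc k) * x \<le> real_of_int \<lceil>real (Suc k) * x\<rceil>"
    using ceiling_correct[of "real (Suc k) * x"] by auto
  then show "left_grid k x < x"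
    by (simp add: left_grid_def divide_less_eq mult.commute)
  have "(real (Suc k) * x - 1) / real (Suc k) \<le> left_grid k x"
    unfolding left_grid_def by (rule divide_right_mono) (use c(2) in auto)
  then show "x - 1 / real (Suc k) \<le> left_grid k x"
    by (simp add: diff_divide_distrib)
qed

lemma filterlim_left_grid: "filterlim (\<lambda>k. left_grid k x) (at_left x) sequentially"
proof -
  have lower: "(\<lambda>k. x - 1 / real (Suc k)) \<longlonglongrightarrow> x"
    using tendsto_diff[OF tendsto_const LIMSEQ_Suc[OF lim_inverse_n'], of x] by simp
  have "\<forall>\<^sub>F k in sequentially. x - 1 / real (Suc k) \<le> left_grid k x"
    "\<forall>\<^sub>F k in sequentially. left_grid k x \<le> x"
    using left_grid_bounds by (simp_all add: less_imp_le)
  from tendsto_sandwich[OF this lower tendsto_const]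
  show ?thesis
    unfolding filterlim_at using left_grid_bounds(2) by (auto simp: less_imp_neq)
qed

lemma measurable_left_grid_comp [measurable]: "(\<lambda>x. Z (left_grid k x)) \<in> borel_measurable lborel"
proof -
  have "(\<lambda>x. \<lceil>real (Suc k) * x\<rceil>) \<in> measurable lborel (count_space UNIV)"
    by measurable
  then have "(\<lambda>x. (\<lambda>j::int. Z ((real_of_int j - 1) / real (Suc k))) \<lceil>real (Suc k) * x\<rceil>)
      \<in> borel_measurable lborel"
    by (rule measurable_compose) simp
  then show ?thesis
    by (simp add: left_grid_def)
qed

lemma cadlag_left_lim_measurable:
  assumes Z: "cadlag_on t Z"
  shows "(\<lambda>x. indicator {0..t} x * left_lim Z x) \<in> borel_measurable lborel"
proof -
  have "(\<lambda>k. indicator {0<..t} x * Z (left_grid k x)) \<longlonglongrightarrow> indicator {0<..t} x * left_lim Z x"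
    for x
  proof (cases "x \<in> {0<..t}")
    case True
    from filterlim_compose[OF cadlag_tendsto_left_lim[OF Z True] filterlim_left_grid]
    show ?thesis
      using True by simp
  qed simp
  then have "(\<lambda>x. indicator {0<..t} x * left_lim Z x) \<in> borel_measurable lborel"
    by (rule borel_measurable_LIMSEQ_real) measurable
  moreover have "(\<lambda>x. indicator {0..t} x * left_lim Z x)
      = (\<lambda>x. indicator {0<..t} x * left_lim Z x + indicator {0} x * (if 0 \<le> t then Z 0 else 0))"
    by (auto simp: indicator_def left_lim_def)
  ultimately show ?thesis
    by simp
qed

lemma set_integrable_mult_bounded:
  fixes f g :: "real \<Rightarrow> real"
  assumes f: "set_integrable lborel A f"
    and g: "(\<lambda>x. indicator A x * g x) \<in> borel_measurable lborel" "\<forall>x\<in>A. \<bar>g x\<bar> \<le> B"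
  shows "set_integrable lborel A (\<lambda>x. g x * f x)"
  unfolding set_integrable_def
proof (rule Bochner_Integration.integrable_bound)
  show "integrable lborel (\<lambda>x. B * (indicator A x * f x))"
    using f by (simp add: set_integrable_def)
  have "(\<lambda>x. indicator A x * f x) \<in> borel_measurable lborel"
    using f by (simp add: set_integrable_def borel_measurable_integrable)
  with g(1) have "(\<lambda>x. (indicator A x * g x) * (indicator A x * f x)) \<in> borel_measurable lborel"
    by simp
  then show "(\<lambda>x. indicator A x *\<^sub>R (g x * f x)) \<in> borel_measurable lborel"
    by (rule measurable_cong[THEN iffD1, rotated]) (simp add: indicator_def)
  show "AE x in lborel. norm (indicator A x *\<^sub>R (g x * f x)) \<le> norm (B * (indicator A x * f x))"
  proof (intro AE_I2)
    fix x
    show "norm (indicator A x *\<^sub>R (g x * f x)) \<le> norm (B * (indicator A x * f x))"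
    proof (cases "x \<in> A")
      case True
      then have "\<bar>g x\<bar> * \<bar>f x\<bar> \<le> \<bar>B\<bar> * \<bar>f x\<bar>"
        using g(2) by (intro mult_right_mono) force+
      then show ?thesis
        using True by (simp add: abs_mult)
    qed simp
  qed
qed

lemma set_integrable_mult_continuous:
  fixes f g :: "real \<Rightarrow> real"
  assumes f: "set_integrable lborel {a..b} f" and g: "continuous_on {a..b} g"
  shows "set_integrable lborel {a..b} (\<lambda>x. f x * g x)"
proof -
  obtain B where B: "\<forall>x\<in>{a..b}. \<bar>g x\<bar> \<le> B"
    using compact_imp_bounded[OF compact_continuous_image[OF g compact_Icc]]
    unfolding bounded_pos by force
  have "(\<lambda>x. indicator {a..b} x * g x) \<in> borel_measurable lborel"
    using borel_measurable_continuous_on_indicator[of "{a..b}" g] g by simp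
  from set_integrable_mult_bounded[OF f this B] show ?thesis
    by (simp add: mult.commute)
qed

lemma set_integral_increment_le:
  fixes F w :: "real \<Rightarrow> real"
  assumes Fw: "set_integrable lborel {0..b} (\<lambda>u. F u * w u)" and w: "set_integrable lborel {0..t} w"
    and F: "\<forall>u\<in>{a<..<b}. \<bar>F u\<bar> \<le> M" and ab: "0 \<le> a" "a \<le> b" "b \<le> t"
  shows "\<bar>(LINT u:{0..b}|lborel. F u * w u) - (LINT u:{0..a}|lborel. F u * w u)\<bar>
      \<le> M * (LINT u:{0..t}|lborel. \<bar>w u\<bar> * indicator {a<..<b} u)"
proof -
  have Fw_a: "set_integrable lborel {0..a} (\<lambda>u. F u * w u)"
    using Fw ab by (auto intro: set_integrable_subset)
  have Fw_ab: "integrable lborel (\<lambda>u. F u * w u * indicator {a<..<b} u)"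
  proof -
    have "integrable lborel (\<lambda>u. (indicator {0..b} u *\<^sub>R (F u * w u)) * indicator {a<..<b} u)"
      using Fw by (intro integrable_real_mult_indicator) (auto simp: set_integrable_def)
    then show ?thesis
      by (rule Bochner_Integration.integrable_cong[THEN iffD1, rotated 2])
        (use ab in \<open>auto simp: indicator_def\<close>)
  qed
  have "(LINT u:{0..b}|lborel. F u * w u) - (LINT u:{0..a}|lborel. F u * w u)
      = integral\<^sup>L lborel (\<lambda>u. indicator {0..b} u *\<^sub>R (F u * w u) - indicator {0..a} u *\<^sub>R (F u * w u))"
    using Fw Fw_a by (simp add: set_lebesgue_integral_def set_integrable_def)
  also have "\<dots> = integral\<^sup>L lborel (\<lambda>u. F u * w u * indicator {a<..<b} u)"
  proof (rule integral_cong_AE)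
    show "AE u in lborel. indicator {0..b} u *\<^sub>R (F u * w u) - indicator {0..a} u *\<^sub>R (F u * w u)
        = F u * w u * indicator {a<..<b} u"
      using AE_lborel_singleton[of b] by eventually_elim (use ab in \<open>auto simp: indicator_def\<close>)
  qed (use Fw Fw_a Fw_ab in \<open>auto simp: set_integrable_def intro: borel_measurable_integrable\<close>)
  finally have "\<bar>(LINT u:{0..b}|lborel. F u * w u) - (LINT u:{0..a}|lborel. F u * w u)\<bar>
      \<le> integral\<^sup>L lborel (\<lambda>u. norm (F u * w u * indicator {a<..<b} u))"
    using integral_norm_bound[of lborel "\<lambda>u. F u * w u * indicator {a<..<b} u"] by simp
  also have "\<dots> \<le> integral\<^sup>L lborel (\<lambda>u. M * (indicator {0..t} u *\<^sub>R (\<bar>w u\<bar> * indicator {a<..<b} u)))"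
  proof (rule integral_mono)
    show "integrable lborel (\<lambda>u. M * (indicator {0..t} u *\<^sub>R (\<bar>w u\<bar> * indicator {a<..<b} u)))"
      using set_integrable_mult_indicator[OF set_integrable_abs[OF w], of "{a<..<b}"]
      by (simp add: set_integrable_def)
    fix u
    show "norm (F u * w u * indicator {a<..<b} u)
        \<le> M * (indicator {0..t} u *\<^sub>R (\<bar>w u\<bar> * indicator {a<..<b} u))"
      using F ab by (cases "u \<in> {a<..<b}") (auto simp: abs_mult intro: mult_right_mono)
  qed (use Fw_ab in simp)
  also have "\<dots> = M * (LINT u:{0..t}|lborel. \<bar>w u\<bar> * indicator {a<..<b} u)"
    by (simp add: set_lebesgue_integral_def)
  finally show ?thesis .
qed

lemma continuous_on_deriv_test_fun:
  assumes "test_fun t \<phi>"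
  shows "continuous_on A \<phi>" "continuous_on A (deriv \<phi>)"
proof -
  have "(deriv ^^ k) \<phi> differentiable (at x)" for k x
    using assms by (simp add: test_fun_def)
  from this[of 0] this[of 1] show "continuous_on A \<phi>" "continuous_on A (deriv \<phi>)"
    by (auto intro!: continuous_at_imp_continuous_on differentiable_imp_continuous_within)
qed

lemma weak_deriv_linear:
  assumes w1: "weak_deriv t h1 g1" and w2: "weak_deriv t h2 g2"
  shows "weak_deriv t (\<lambda>u. a * h1 u + b * h2 u) (\<lambda>u. a * g1 u + b * g2 u)"
proof -
  have i: "set_integrable lborel {0..t} h1" "set_integrable lborel {0..t} h2"
    "set_integrable lborel {0..t} g1" "set_integrable lborel {0..t} g2"
    using w1 w2 by (auto simp: weak_deriv_def)
  have "(LINT u:{0..t}|lborel. (a * h1 u + b * h2 u) * deriv \<phi> u)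
      = - (LINT u:{0..t}|lborel. (a * g1 u + b * g2 u) * \<phi> u)"
    if \<phi>: "test_fun t \<phi>" for \<phi>
  proof -
    note c = continuous_on_deriv_test_fun[OF \<phi>]
    have "(LINT u:{0..t}|lborel. (a * h1 u + b * h2 u) * deriv \<phi> u)
        = a * (LINT u:{0..t}|lborel. h1 u * deriv \<phi> u) + b * (LINT u:{0..t}|lborel. h2 u * deriv \<phi> u)"
      using set_integrable_mult_continuous[OF i(1) c(2)] set_integrable_mult_continuous[OF i(2) c(2)]
      by (simp add: algebra_simps)
    also have "\<dots> = - (a * (LINT u:{0..t}|lborel. g1 u * \<phi> u) + b * (LINT u:{0..t}|lborel. g2 u * \<phi> u))"
      using w1 w2 \<phi> by (simp add: weak_deriv_def)
    also have "\<dots> = - (LINT u:{0..t}|lborel. (a * g1 u + b * g2 u) * \<phi> u)"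
      using set_integrable_mult_continuous[OF i(3) c(1)] set_integrable_mult_continuous[OF i(4) c(1)]
      by (simp add: algebra_simps)
    finally show ?thesis .
  qed
  then show ?thesis
    using i by (simp add: weak_deriv_def)
qed

lemma weak_deriv_wderiv_linear:
  assumes h: "h1 \<in> sobolev t m" "h2 \<in> sobolev t m" and m: "1 \<le> m"
  shows "weak_deriv t (\<lambda>u. a * h1 u + b * h2 u) (wderiv t (\<lambda>u. a * h1 u + b * h2 u))"
proof -
  have lin: "weak_deriv t (\<lambda>u. a * h1 u + b * h2 u) (\<lambda>u. a * wderiv t h1 u + b * wderiv t h2 u)"
    using h m by (intro weak_deriv_linear weak_deriv_wderiv)
  show ?thesis
    unfolding wderiv_def[of t "\<lambda>u. a * h1 u + b * h2 u"]
    by (rule someI[of "weak_deriv t (\<lambda>u. a * h1 u + b * h2 u)", OF lin])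
qed

lemma wderiv_linear_AE:
  assumes h: "h1 \<in> sobolev t m" "h2 \<in> sobolev t m" and m: "1 \<le> m" and t: "0 \<le> t"
  shows "AE u in lborel. u \<in> {0..t} \<longrightarrow>
    wderiv t (\<lambda>u. a * h1 u + b * h2 u) u = a * wderiv t h1 u + b * wderiv t h2 u"
proof (rule weak_deriv_unique_AE[OF _ weak_deriv_wderiv_linear[OF h m] _ t])
  show "continuous_on {0..t} (\<lambda>u. a * h1 u + b * h2 u)"
    using h by (auto simp: sobolev_def intro!: continuous_intros)
  show "weak_deriv t (\<lambda>u. a * h1 u + b * h2 u) (\<lambda>u. a * wderiv t h1 u + b * wderiv t h2 u)"
    using h m by (intro weak_deriv_linear weak_deriv_wderiv)
qed

lemma weak_deriv_zero: "weak_deriv t (\<lambda>u. 0) (\<lambda>u. 0)"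
  by (simp add: weak_deriv_def set_integrable_def)

lemma weak_deriv_AE_zero:
  assumes g: "weak_deriv t f g" and f: "AE u in lborel. u \<in> {0..t} \<longrightarrow> f u = 0" and t: "0 \<le> t"
  shows "AE u in lborel. u \<in> {0..t} \<longrightarrow> g u = 0"
proof -
  have "weak_deriv t (\<lambda>u. 0) g"
    unfolding weak_deriv_def
  proof (intro conjI allI impI)
    fix \<phi> assume \<phi>: "test_fun t \<phi>"
    have "(LINT u:{0..t}|lborel. f u * deriv \<phi> u) = 0"
      unfolding set_lebesgue_integral_def
      by (rule integral_eq_zero_AE) (use f in \<open>eventually_elim, auto simp: indicator_def\<close>)
    then show "(LINT u:{0..t}|lborel. 0 * deriv \<phi> u) = - (LINT u:{0..t}|lborel. g u * \<phi> u)"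
      using g \<phi> by (simp add: weak_deriv_def)
  qed (use g in \<open>auto simp: weak_deriv_def set_integrable_def\<close>)
  from weak_deriv_unique_AE[OF _ this weak_deriv_zero t] show ?thesis
    by simp
qed

lemma zero_in_sobolev_unit_ball:
  assumes t: "0 \<le> t"
  shows "(\<lambda>u. 0) \<in> sobolev_unit_ball t m"
proof -
  have "sob_derivs t m (\<lambda>u. 0) (\<lambda>k u. 0)"
    by (simp add: sob_derivs_def weak_deriv_zero set_integrable_def set_borel_measurable_def)
  then have zero: "(\<lambda>u. 0) \<in> sobolev t m"
    by (auto simp: sobolev_def)
  define D where "D = (SOME D. sob_derivs t m (\<lambda>u. 0) D)"
  have "\<exists>D. sob_derivs t m (\<lambda>u. 0) D"
    using zero by (simp add: sobolev_def)
  then have "sob_derivs t m (\<lambda>u. 0) D"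
    unfolding D_def by (rule someI_ex)
  then have D0: "D 0 = (\<lambda>u. 0)" and D_deriv: "\<And>k. k < m \<Longrightarrow> weak_deriv t (D k) (D (Suc k))"
    unfolding sob_derivs_def by blast+
  have D_AE: "AE u in lborel. u \<in> {0..t} \<longrightarrow> D k u = 0" if "k \<le> m" for k
    using that
  proof (induction k)
    case (Suc k)
    then have "AE u in lborel. u \<in> {0..t} \<longrightarrow> D k u = 0"
      by simp
    with D_deriv[of k] Suc.prems t show ?case
      using weak_deriv_AE_zero by simp
  qed (simp add: D0)
  have "(LINT u:{0..t}|lborel. (D k u)\<^sup>2) = 0" if "k \<le> m" for k
  proof -
    from D_AE[OF that] have "AE u in lborel. indicator {0..t} u *\<^sub>R (D k u)\<^sup>2 = 0"
      by eventually_elim (simp add: indicator_def)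
    then show ?thesis
      unfolding set_lebesgue_integral_def by (rule integral_eq_zero_AE)
  qed
  then have "sob_norm t m (\<lambda>u. 0) = 0"
    by (simp add: sob_norm_def D_def[symmetric] Let_def)
  with zero show ?thesis
    by simp
qed

lemma dual_norm_le:
  assumes "\<And>h. h \<in> sobolev_unit_ball t m \<Longrightarrow> \<bar>L h\<bar> \<le> B"
  shows "dual_norm t m L \<le> ereal B"
  unfolding dual_norm_def using assms by (intro SUP_least) auto

lemma dual_norm_nonneg:
  assumes "0 \<le> t"
  shows "0 \<le> dual_norm t m L"
proof -
  have "ereal \<bar>L (\<lambda>u. 0)\<bar> \<le> dual_norm t m L"
    unfolding dual_norm_def using zero_in_sobolev_unit_ball[OF assms] by (rule SUP_upper)
  then show ?thesis
    by (rule order_trans[rotated]) simp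
qed

lemma dual_norm_minus_commute:
  "dual_norm t m (\<lambda>h. L1 h - L2 h) = dual_norm t m (\<lambda>h. L2 h - L1 h)"
  by (simp add: dual_norm_def abs_minus_commute)

lemma in_dualI:
  assumes "\<And>h g a b. h \<in> sobolev t m \<Longrightarrow> g \<in> sobolev t m \<Longrightarrow>
      L (\<lambda>u. a * h u + b * g u) = a * L h + b * L g"
    and "\<And>h. h \<in> sobolev_unit_ball t m \<Longrightarrow> \<bar>L h\<bar> \<le> B"
  shows "in_dual t m L"
  unfolding in_dual_def using assms dual_norm_le[of t m L B] by (auto intro: le_less_trans)

lemma tendsto_dual_norm_0:
  assumes t: "0 \<le> t"
    and bound: "eventually (\<lambda>x. \<forall>h\<in>sobolev_unit_ball t m. \<bar>L x h\<bar> \<le> \<beta> x) F"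
    and \<beta>: "(\<beta> \<longlongrightarrow> 0) F"
  shows "((\<lambda>x. dual_norm t m (L x)) \<longlongrightarrow> 0) F"
proof (rule tendsto_sandwich[where f = "\<lambda>x. 0" and h = "\<lambda>x. ereal (\<beta> x)"])
  show "\<forall>\<^sub>F x in F. 0 \<le> dual_norm t m (L x)"
    using dual_norm_nonneg[OF t] by simp
  show "\<forall>\<^sub>F x in F. dual_norm t m (L x) \<le> ereal (\<beta> x)"
    using bound by eventually_elim (auto intro: dual_norm_le)
  show "((\<lambda>x. ereal (\<beta> x)) \<longlongrightarrow> 0) F"
    using tendsto_ereal[OF \<beta>] by (simp add: zero_ereal_def)
qed simp

section \<open>The integral process of a bounded cadlag path\<close>

locale cadlag_integrator =
  fixes t :: real and m :: nat and Z :: "real \<Rightarrow> real" and M :: real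
  assumes t_pos: "0 < t" and m_pos: "1 \<le> m" and cadlag: "cadlag_on t Z"
    and path_bound: "\<And>y. y \<in> {0..t} \<Longrightarrow> \<bar>Z y\<bar> \<le> M"
begin

lemma M_nonneg: "0 \<le> M"
  using path_bound[of 0] t_pos by simp

lemma left_lim_bound: "y \<in> {0..t} \<Longrightarrow> \<bar>left_lim Z y\<bar> \<le> M"
  using cadlag_left_lim_bounded[OF cadlag] path_bound by blast

definition integral_term :: "(real \<Rightarrow> real) \<Rightarrow> real \<Rightarrow> real" where
  "integral_term h s = (LINT u:{0..s}|lborel. left_lim Z u * wderiv t h u)"

definition path_functional :: "real \<Rightarrow> real \<Rightarrow> (real \<Rightarrow> real) \<Rightarrow> real" where
  "path_functional s v h = h s * v - h 0 * Z 0 - integral_term h s"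

lemma pw_int_eq: "pw_int t Z s = path_functional s (Z s)"
  by (simp add: fun_eq_iff pw_int_def path_functional_def integral_term_def)

lemma pw_int_left_eq: "pw_int_left t Z s = path_functional s (left_lim Z s)"
  by (simp add: fun_eq_iff pw_int_left_def path_functional_def integral_term_def)

lemma set_integrable_left_lim_mult:
  assumes w: "set_integrable lborel {0..t} w" and s: "s \<le> t"
  shows "set_integrable lborel {0..s} (\<lambda>u. left_lim Z u * w u)"
proof (rule set_integrable_mult_bounded)
  show "set_integrable lborel {0..s} w"
    using w s by (auto intro: set_integrable_subset)
  have "(\<lambda>x. indicator {0..s} x * (indicator {0..t} x * left_lim Z x)) \<in> borel_measurable lborel"
    using cadlag_left_lim_measurable[OF cadlag] by simp
  then show "(\<lambda>x. indicator {0..s} x * left_lim Z x) \<in> borel_measurable lborel"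
    by (rule measurable_cong[THEN iffD1, rotated]) (use s in \<open>simp add: indicator_def\<close>)
  show "\<forall>u\<in>{0..s}. \<bar>left_lim Z u\<bar> \<le> M"
    using left_lim_bound s by simp
qed

lemma set_integrable_wderiv:
  "h \<in> sobolev t m \<Longrightarrow> set_integrable lborel {0..t} (wderiv t h)"
  using weak_deriv_wderiv[OF _ m_pos] by (simp add: weak_deriv_def)

lemma integral_term_linear:
  assumes h: "h1 \<in> sobolev t m" "h2 \<in> sobolev t m" and s: "s \<le> t"
  shows "integral_term (\<lambda>u. a * h1 u + b * h2 u) s = a * integral_term h1 s + b * integral_term h2 s"
proof -
  note i = set_integrable_left_lim_mult[OF set_integrable_wderiv s]
  have "integral_term (\<lambda>u. a * h1 u + b * h2 u) s
      = (LINT u:{0..s}|lborel. left_lim Z u * (a * wderiv t h1 u + b * wderiv t h2 u))"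
    unfolding integral_term_def
  proof (rule set_integral_eq_if_AE_eq)
    have "set_integrable lborel {0..t} (wderiv t (\<lambda>u. a * h1 u + b * h2 u))"
      using weak_deriv_wderiv_linear[OF h m_pos] by (simp add: weak_deriv_def)
    then show "set_integrable lborel {0..s}
        (\<lambda>u. left_lim Z u * wderiv t (\<lambda>u. a * h1 u + b * h2 u) u)"
      by (rule set_integrable_left_lim_mult[OF _ s])
    show "set_integrable lborel {0..s} (\<lambda>u. left_lim Z u * (a * wderiv t h1 u + b * wderiv t h2 u))"
      using set_integral_add(1)[OF set_integrable_mult_right[OF i[OF h(1)], of a]
          set_integrable_mult_right[OF i[OF h(2)], of b]]
      by (simp add: algebra_simps)
    show "AE u in lborel. u \<in> {0..s} \<longrightarrow> left_lim Z u * wderiv t (\<lambda>u. a * h1 u + b * h2 u) u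
        = left_lim Z u * (a * wderiv t h1 u + b * wderiv t h2 u)"
    proof -
      have "AE u in lborel. u \<in> {0..t} \<longrightarrow>
          wderiv t (\<lambda>u. a * h1 u + b * h2 u) u = a * wderiv t h1 u + b * wderiv t h2 u"
        using wderiv_linear_AE[OF h m_pos] t_pos by simp
      then show ?thesis
        by eventually_elim (use s in auto)
    qed
  qed
  also have "\<dots> = a * integral_term h1 s + b * integral_term h2 s"
    using i[OF h(1)] i[OF h(2)] by (simp add: integral_term_def algebra_simps)
  finally show ?thesis .
qed

lemma integral_term_0: "integral_term h 0 = 0"
  unfolding integral_term_def set_lebesgue_integral_def
  by (rule integral_eq_zero_AE) (use AE_lborel_singleton[of 0] in \<open>eventually_elim, simp\<close>)

lemma integral_term_increment:
  assumes h: "h \<in> sobolev_unit_ball t m" and ab: "0 \<le> a" "a \<le> b" "b \<le> t"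
  shows "\<bar>integral_term h b - integral_term h a\<bar> \<le> M * sqrt (b - a)"
proof -
  have w: "set_integrable lborel {0..t} (wderiv t h)"
    using h by (intro set_integrable_wderiv) simp
  have "\<bar>integral_term h b - integral_term h a\<bar>
      \<le> M * (LINT u:{0..t}|lborel. \<bar>wderiv t h u\<bar> * indicator {a<..<b} u)"
    unfolding integral_term_def
    by (rule set_integral_increment_le[OF set_integrable_left_lim_mult[OF w ab(3)] w _ ab])
      (use left_lim_bound ab in auto)
  also have "\<dots> \<le> M * sqrt (b - a)"
    using sobolev_unit_ball_wderiv_integral[OF h m_pos ab] M_nonneg by (rule mult_left_mono)
  finally show ?thesis .
qed

lemma integral_term_bound:
  assumes h: "h \<in> sobolev_unit_ball t m" and s: "s \<in> {0..t}"
  shows "\<bar>integral_term h s\<bar> \<le> M * sqrt t"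
proof -
  have "\<bar>integral_term h s\<bar> \<le> M * sqrt s"
    using integral_term_increment[OF h, of 0 s] s by (simp add: integral_term_0)
  also have "\<dots> \<le> M * sqrt t"
    using s M_nonneg by (intro mult_left_mono) auto
  finally show ?thesis .
qed

lemma in_dual_path_functional:
  assumes s: "s \<in> {0..t}" and v: "\<bar>v\<bar> \<le> M"
  shows "in_dual t m (path_functional s v)"
proof (rule in_dualI)
  fix h g a b assume "h \<in> sobolev t m" "g \<in> sobolev t m"
  then show "path_functional s v (\<lambda>u. a * h u + b * g u)
      = a * path_functional s v h + b * path_functional s v g"
    using integral_term_linear s by (simp add: path_functional_def algebra_simps)
next
  fix h assume h: "h \<in> sobolev_unit_ball t m"
  let ?C = "sobolev_embedding_const t"
  have "\<bar>h s\<bar> \<le> ?C" "\<bar>h 0\<bar> \<le> ?C"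
    using sobolev_unit_ball_abs_le[OF h m_pos t_pos] s t_pos by auto
  then have "\<bar>h s * v\<bar> \<le> ?C * M" "\<bar>h 0 * Z 0\<bar> \<le> ?C * M"
    using v path_bound[of 0] t_pos by (simp_all add: abs_mult mult_mono')
  moreover have "\<bar>integral_term h s\<bar> \<le> M * sqrt t"
    by (rule integral_term_bound[OF h s])
  ultimately show "\<bar>path_functional s v h\<bar> \<le> ?C * M + ?C * M + M * sqrt t"
    unfolding path_functional_def by linarith
qed

lemma path_functional_increment:
  assumes h: "h \<in> sobolev_unit_ball t m" and ab: "0 \<le> a" "a \<le> b" "b \<le> t" and w: "\<bar>w\<bar> \<le> M"
  shows "\<bar>path_functional b w h - path_functional a v h\<bar>
      \<le> 2 * M * sqrt (b - a) + sobolev_embedding_const t * \<bar>w - v\<bar>"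
proof -
  have "path_functional b w h - path_functional a v h
      = (h b - h a) * w + h a * (w - v) - (integral_term h b - integral_term h a)"
    by (simp add: path_functional_def algebra_simps)
  moreover have "\<bar>(h b - h a) * w\<bar> \<le> M * sqrt (b - a)"
    using sobolev_unit_ball_holder[OF h m_pos ab] w
    by (simp add: abs_mult mult_mono' mult.commute[of M])
  moreover have "\<bar>h a * (w - v)\<bar> \<le> sobolev_embedding_const t * \<bar>w - v\<bar>"
    using sobolev_unit_ball_abs_le[OF h m_pos t_pos, of a] ab by (simp add: abs_mult mult_right_mono)
  moreover have "\<bar>integral_term h b - integral_term h a\<bar> \<le> M * sqrt (b - a)"
    by (rule integral_term_increment[OF h ab])
  ultimately show ?thesis
    by linarith
qed

lemma tendsto_dual_norm_path_functional:
  assumes ev: "eventually (\<lambda>x. 0 \<le> a x \<and> a x \<le> b x \<and> b x \<le> t \<and> \<bar>w x\<bar> \<le> M) F"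
    and ab: "((\<lambda>x. b x - a x) \<longlongrightarrow> 0) F" and wv: "((\<lambda>x. w x - v x) \<longlongrightarrow> 0) F"
  shows "((\<lambda>x. dual_norm t m (\<lambda>h. path_functional (b x) (w x) h - path_functional (a x) (v x) h))
      \<longlongrightarrow> 0) F"
proof (rule tendsto_dual_norm_0[OF less_imp_le[OF t_pos]])
  show "eventually (\<lambda>x. \<forall>h\<in>sobolev_unit_ball t m.
      \<bar>path_functional (b x) (w x) h - path_functional (a x) (v x) h\<bar>
      \<le> 2 * M * sqrt (b x - a x) + sobolev_embedding_const t * \<bar>w x - v x\<bar>) F"
    using ev by eventually_elim (use path_functional_increment in blast)
  have "((\<lambda>x. sqrt (b x - a x)) \<longlongrightarrow> 0) F"
    using tendsto_real_sqrt[OF ab] by simp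
  then show "((\<lambda>x. 2 * M * sqrt (b x - a x) + sobolev_embedding_const t * \<bar>w x - v x\<bar>) \<longlongrightarrow> 0) F"
    by (intro tendsto_add_zero tendsto_mult_right_zero tendsto_rabs_zero wv)
qed

lemma pw_int_right_continuous:
  assumes s: "s \<in> {0..<t}"
  shows "((\<lambda>\<epsilon>. dual_norm t m (\<lambda>h. pw_int t Z (s + \<epsilon>) h - pw_int t Z s h)) \<longlongrightarrow> 0) (at_right 0)"
  unfolding pw_int_eq
proof (rule tendsto_dual_norm_path_functional)
  show "\<forall>\<^sub>F \<epsilon> in at_right 0. 0 \<le> s \<and> s \<le> s + \<epsilon> \<and> s + \<epsilon> \<le> t \<and> \<bar>Z (s + \<epsilon>)\<bar> \<le> M"
    using s path_bound unfolding eventually_at_right_field by (intro exI[of _ "t - s"]) auto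
  show "((\<lambda>\<epsilon>. s + \<epsilon> - s) \<longlongrightarrow> 0) (at_right 0)"
    by simp
  have "(Z \<longlongrightarrow> Z s) (at_right s)"
    using cadlag s by (simp add: cadlag_on_def continuous_within)
  then have "((\<lambda>\<epsilon>. Z (\<epsilon> + s)) \<longlongrightarrow> Z s) (at_right 0)"
    by (simp add: filterlim_at_right_to_0[of Z _ s])
  then show "((\<lambda>\<epsilon>. Z (s + \<epsilon>) - Z s) \<longlongrightarrow> 0) (at_right 0)"
    by (simp add: add.commute LIM_zero)
qed

lemma pw_int_left_limit:
  assumes s: "s \<in> {0<..t}"
  shows "((\<lambda>\<epsilon>. dual_norm t m (\<lambda>h. pw_int t Z (s - \<epsilon>) h - pw_int_left t Z s h)) \<longlongrightarrow> 0)
    (at_right 0)"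
  unfolding pw_int_eq pw_int_left_eq dual_norm_minus_commute[of t m]
proof (rule tendsto_dual_norm_path_functional)
  show "\<forall>\<^sub>F \<epsilon> in at_right 0. 0 \<le> s - \<epsilon> \<and> s - \<epsilon> \<le> s \<and> s \<le> t \<and> \<bar>left_lim Z s\<bar> \<le> M"
    using s left_lim_bound unfolding eventually_at_right_field by (intro exI[of _ s]) auto
  show "((\<lambda>\<epsilon>. s - (s - \<epsilon>)) \<longlongrightarrow> 0) (at_right 0)"
    by simp
  have "((\<lambda>x. Z (- x)) \<longlongrightarrow> left_lim Z s) (at_right (- s))"
    using cadlag_tendsto_left_lim[OF cadlag s] by (simp add: filterlim_at_left_to_right)
  then have "((\<lambda>\<epsilon>. Z (- (\<epsilon> + - s))) \<longlongrightarrow> left_lim Z s) (at_right 0)"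
    by (simp add: filterlim_at_right_to_0[of "\<lambda>x. Z (- x)" _ "- s"])
  then have "((\<lambda>\<epsilon>. Z (s - \<epsilon>) - left_lim Z s) \<longlongrightarrow> 0) (at_right 0)"
    by (simp add: LIM_zero)
  then show "((\<lambda>\<epsilon>. left_lim Z s - Z (s - \<epsilon>)) \<longlongrightarrow> 0) (at_right 0)"
    using tendsto_minus by fastforce
qed

end

theorem lemmaA3:
  fixes t :: real and m :: nat and Z :: "real \<Rightarrow> real"
  assumes "t > 0" and "m \<ge> 1" and "cadlag_on t Z"
  shows "(\<forall>s\<in>{0..t}. in_dual t m (pw_int t Z s)) \<and>
         (\<forall>s\<in>{0..<t}.
            ((\<lambda>\<epsilon>. dual_norm t m (\<lambda>h. pw_int t Z (s + \<epsilon>) h - pw_int t Z s h))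
               \<longlongrightarrow> (0::ereal)) (at_right (0::real))) \<and>
         (\<forall>s\<in>{0<..t}. in_dual t m (pw_int_left t Z s) \<and>
            ((\<lambda>\<epsilon>. dual_norm t m (\<lambda>h. pw_int t Z (s - \<epsilon>) h - pw_int_left t Z s h))
               \<longlongrightarrow> (0::ereal)) (at_right (0::real)))"
proof -
  obtain M where "\<forall>y\<in>{0..t}. \<bar>Z y\<bar> \<le> M"
    using cadlag_bounded[OF assms(3)] by blast
  then interpret cadlag_integrator t m Z M
    using assms by unfold_locales auto
  have "in_dual t m (pw_int t Z s)" if "s \<in> {0..t}" for s
    unfolding pw_int_eq using that path_bound by (intro in_dual_path_functional) auto
  moreover have "in_dual t m (pw_int_left t Z s)" if "s \<in> {0<..t}" for s
    unfolding pw_int_left_eq using that left_lim_bound by (intro in_dual_path_functional) auto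
  ultimately show ?thesis
    using pw_int_right_continuous pw_int_left_limit by blast
qed

end
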